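(* Let $\mathcal{H}$ be a separable Hilbert space with inner product $\langle\cdot,\cdot\rangle$ and norm $\|\cdot\|$, let $X\subset\mathcal{H}$ be closed and convex, and let $\Lambda,\Sigma>0$. Let $v:X\to\mathcal{H}$ and $R:X\to\mathbb{R}$ be bounded Borel measurable functions and let $\mathcal{N}$ be a neighbourhood of $0$ such that for all $h\in\mathcal{N}$, $x\in X$: $x+hv(x)\in X$ and $1+hR(x)>0$. Given $\nu_0\in\mathcal{M}(X)$, define $\nu_h\in\mathcal{M}(X)$ for $h\in\mathcal{N}$ by $\int_X\phi\,d\nu_h=\int_X\phi(x+hv(x))(1+hR(x))^2\,d\nu_0(x)$ for all $\phi\in C_b(X)$. Let $\mu\in\mathcal{M}(X)$ and let $\beta_{0,\star}\in\mathcal{M}(\mathfrak{C}\times\mathfrak{C})$ be optimal in the cone formulation of $\mathrm{HK}_{\Lambda,\Sigma}(\nu_0,\mu)^2$, with first marginal $\alpha_0\in\mathcal{M}_2(\mathfrak{C})$, $\mathfrak{h}\alpha_0\le\nu_0$, and second marginal $\alpha_\star\in\mathcal{M}_2(\mathfrak{C})$, $\mathfrak{h}\alpha_\star\le\mu$. Then the Fréchet subdifferential of $h\mapsto-\frac12\mathrm{HK}_{\Lambda,\Sigma}(\nu_h,\mu)^2$ at $h=0$ is nonempty and contains $$\mathfrak{F}_{0,\star,v,R}-\frac4\Sigma\int_X R(x)\,d(\nu_0-\mathfrak{h}\alpha_0)(x),$$ where $$\mathfrak{F}_{0,\star,v,R}=\frac4\Sigma\int_{\mathfrak{C}\times\mathfrak{C}}\Big[-r_1^2R(x_1)+r_1r_2R(x_1)\cos\big(\sqrt{\Sigma/(4\Lambda)}\|x_1-x_2\|\big)+r_1r_2\sqrt{\Sigma/(4\Lambda)}\,\langle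 S_{\Lambda,\Sigma}(x_1,x_2),v(x_1)\rangle\Big]\,d\beta_{0,\star},$$ with $S_{\Lambda,\Sigma}(x_1,x_2)=\frac{\sin(\sqrt{\Sigma/(4\Lambda)}\|x_1-x_2\|)}{\|x_1-x_2\|}(x_2-x_1)$ for $x_1\ne x_2$ and $S_{\Lambda,\Sigma}(x_1,x_1)=0$.
   Context: $\mathcal{M}(X)$: finite nonnegative Radon measures on $X$. Cone: $\mathfrak{C}=(X\times[0,\infty))/\sim$, where $(x_1,r_1)\sim(x_2,r_2)$ iff $r_1=r_2=0$ or ($r_1=r_2$, $x_1=x_2$); $[x,r]$ denotes classes, $\mathfrak{o}$ the vertex, identified with $[\bar x,0]$ for a fixed $\bar x\in X$. Cone distance: $\mathsf{d}_{\mathfrak{C},\Lambda,\Sigma}([x_1,r_1],[x_2,r_2])^2=\frac4\Sigma\big(r_1^2+r_2^2-2r_1r_2\cos(\min\{\sqrt{\Sigma/(4\Lambda)}\|x_1-x_2\|,\pi\})\big)$. $\mathcal{M}_2(\mathfrak{C})$: finite nonnegative Radon measures on $\mathfrak{C}$ with finite second moment $\int\mathsf{d}_{\mathfrak{C},\Lambda,\Sigma}([x,r],\mathfrak{o})^2d\alpha<\infty$. For $\alpha\in\mathcal{M}_2(\mathfrak{C})$, $\mathfrak{h}\alpha\in\mathcal{M}(X)$ is defined by $\int_X\phi\,d(\mathfrak{h}\alpha)=\int_{\mathfrak{C}}r^2\phi(x)\,d\alpha([x,r])$. The Hellinger–Kantorovich distance satisfies (cone formulation) $\mathrm{HK}_{\Lambda,\Sigma}(\mu_1,\mu_2)^2=\min\{\int_{\mathfrak{C}\times\mathfrak{C}}\mathsf{d}_{\mathfrak{C},\Lambda,\Sigma}^2\,d\beta+\frac4\Sigma\sum_{i=1}^2(\mu_i-\mathfrak{h}\beta_i)(X)\}$,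 the minimum over finite nonnegative Radon measures $\beta$ on $\mathfrak{C}\times\mathfrak{C}$ whose marginals $\beta_1,\beta_2$ lie in $\mathcal{M}_2(\mathfrak{C})$ with $\mathfrak{h}\beta_i\le\mu_i$; $\beta$ is called optimal if it attains this minimum. (It is known that such optimal $\beta$ give no mass to $\{r_1,r_2>0,\ \|x_1-x_2\|>\pi\sqrt{\Lambda/\Sigma}\}$.) A number $\varsigma$ belongs to the Fréchet subdifferential of $f:\mathcal{N}\to\mathbb{R}$ at $0$ iff $\liminf_{h\to0}\frac{f(h)-f(0)-\varsigma h}{|h|}\ge0$. *)

theory Defs
  imports "HOL-Analysis.Analysis"
begin

text \<open>The separable Hilbert space is a type of class real_inner and polish_space
(complete + second countable). Finite nonnegative (Radon) measures on X are finite Borel measures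
on the whole space concentrated on X (on a Polish space every finite Borel measure is Radon).
The cone over X is represented by canonical representatives: points (x,r) with x in X and r > 0,
together with the vertex (xbar,0) for a fixed xbar in X.\<close>

definition meas_on :: "'a::topological_space set \<Rightarrow> 'a measure \<Rightarrow> bool" where
  "meas_on X M \<longleftrightarrow> sets M = sets borel \<and> emeasure M (space M) < \<infinity> \<and> emeasure M (space M - X) = 0"

definition cone_set :: "'a set \<Rightarrow> 'a \<Rightarrow> ('a \<times> real) set" where
  "cone_set X xbar = {(x, r). x \<in> X \<and> 0 < r} \<union> {(xbar, 0)}"

definition cone_vertex :: "'a \<Rightarrow> 'a \<times> real" where
  "cone_vertex xbar = (xbar, 0)"

definition cone_d2 :: "real \<Rightarrow> real \<Rightarrow> ('a::real_normed_vector \<times> real) \<Rightarrow> ('a \<times> real) \<Rightarrow> real" where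
  "cone_d2 \<Lambda> \<Sigma> p q = (4 / \<Sigma>) * ((snd p)\<^sup>2 + (snd q)\<^sup>2
      - 2 * snd p * snd q * cos (min (sqrt (\<Sigma> / (4 * \<Lambda>)) * norm (fst p - fst q)) pi))"

definition cone_M2 :: "real \<Rightarrow> real \<Rightarrow> 'a::real_normed_vector set \<Rightarrow> 'a \<Rightarrow> ('a \<times> real) measure \<Rightarrow> bool" where
  "cone_M2 \<Lambda> \<Sigma> X xbar \<alpha> \<longleftrightarrow> sets \<alpha> = sets borel \<and> emeasure \<alpha> (space \<alpha>) < \<infinity>
     \<and> emeasure \<alpha> (space \<alpha> - cone_set X xbar) = 0
     \<and> (\<integral>\<^sup>+ p. ennreal (cone_d2 \<Lambda> \<Sigma> p (cone_vertex xbar)) \<partial>\<alpha>) < \<infinity>"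

definition hmarg :: "('a::topological_space \<times> real) measure \<Rightarrow> 'a measure" where
  "hmarg \<alpha> = distr (density \<alpha> (\<lambda>p. ennreal ((snd p)\<^sup>2))) borel fst"

definition meas_le :: "'a measure \<Rightarrow> 'a measure \<Rightarrow> bool" where
  "meas_le M N \<longleftrightarrow> (\<forall>A \<in> sets M. emeasure M A \<le> emeasure N A)"

definition marg1 :: "(('a::topological_space \<times> real) \<times> ('a \<times> real)) measure \<Rightarrow> ('a \<times> real) measure" where
  "marg1 \<beta> = distr \<beta> borel fst"

definition marg2 :: "(('a::topological_space \<times> real) \<times> ('a \<times> real)) measure \<Rightarrow> ('a \<times> real) measure" where
  "marg2 \<beta> = distr \<beta> borel snd"

definition HK_admissible :: "real \<Rightarrow> real \<Rightarrow> 'a::{real_normed_vector, second_countable_topology} set \<Rightarrow> 'a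
    \<Rightarrow> 'a measure \<Rightarrow> 'a measure \<Rightarrow> (('a \<times> real) \<times> ('a \<times> real)) measure \<Rightarrow> bool" where
  "HK_admissible \<Lambda> \<Sigma> X xbar \<mu>1 \<mu>2 \<beta> \<longleftrightarrow>
     sets \<beta> = sets borel \<and> emeasure \<beta> (space \<beta>) < \<infinity>
     \<and> emeasure \<beta> (space \<beta> - cone_set X xbar \<times> cone_set X xbar) = 0
     \<and> cone_M2 \<Lambda> \<Sigma> X xbar (marg1 \<beta>) \<and> cone_M2 \<Lambda> \<Sigma> X xbar (marg2 \<beta>)
     \<and> meas_le (hmarg (marg1 \<beta>)) \<mu>1 \<and> meas_le (hmarg (marg2 \<beta>)) \<mu>2"

definition HK_cost :: "real \<Rightarrow> real \<Rightarrow> 'a::{real_normed_vector, second_countable_topology} measure \<Rightarrow> 'a measure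
    \<Rightarrow> (('a \<times> real) \<times> ('a \<times> real)) measure \<Rightarrow> real" where
  "HK_cost \<Lambda> \<Sigma> \<mu>1 \<mu>2 \<beta> =
     (\<integral> pq. cone_d2 \<Lambda> \<Sigma> (fst pq) (snd pq) \<partial>\<beta>)
     + (4 / \<Sigma>) * ((measure \<mu>1 (space \<mu>1) - measure (hmarg (marg1 \<beta>)) (space (hmarg (marg1 \<beta>))))
                 + (measure \<mu>2 (space \<mu>2) - measure (hmarg (marg2 \<beta>)) (space (hmarg (marg2 \<beta>)))))"

text \<open>HK^2 as the infimum (it is known to be attained) of the cone formulation.\<close>
definition HK2 :: "real \<Rightarrow> real \<Rightarrow> 'a::{real_normed_vector, second_countable_topology} set \<Rightarrow> 'a
    \<Rightarrow> 'a measure \<Rightarrow> 'a measure \<Rightarrow> real" where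
  "HK2 \<Lambda> \<Sigma> X xbar \<mu>1 \<mu>2 = Inf (HK_cost \<Lambda> \<Sigma> \<mu>1 \<mu>2 ` {\<beta>. HK_admissible \<Lambda> \<Sigma> X xbar \<mu>1 \<mu>2 \<beta>})"

definition HK_optimal :: "real \<Rightarrow> real \<Rightarrow> 'a::{real_normed_vector, second_countable_topology} set \<Rightarrow> 'a
    \<Rightarrow> 'a measure \<Rightarrow> 'a measure \<Rightarrow> (('a \<times> real) \<times> ('a \<times> real)) measure \<Rightarrow> bool" where
  "HK_optimal \<Lambda> \<Sigma> X xbar \<mu>1 \<mu>2 \<beta> \<longleftrightarrow> HK_admissible \<Lambda> \<Sigma> X xbar \<mu>1 \<mu>2 \<beta>
     \<and> (\<forall>\<beta>'. HK_admissible \<Lambda> \<Sigma> X xbar \<mu>1 \<mu>2 \<beta>' \<longrightarrow> HK_cost \<Lambda> \<Sigma> \<mu>1 \<mu>2 \<beta> \<le> HK_cost \<Lambda> \<Sigma> \<mu>1 \<mu>2 \<beta>')"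

definition frechet_subdiff0 :: "(real \<Rightarrow> real) \<Rightarrow> real set" where
  "frechet_subdiff0 f = {\<zeta>. Liminf (at 0) (\<lambda>h. ereal ((f h - f 0 - \<zeta> * h) / \<bar>h\<bar>)) \<ge> 0}"

definition S_LS :: "real \<Rightarrow> real \<Rightarrow> 'a::real_normed_vector \<Rightarrow> 'a \<Rightarrow> 'a" where
  "S_LS \<Lambda> \<Sigma> x1 x2 = (if x1 = x2 then 0
     else (sin (sqrt (\<Sigma> / (4 * \<Lambda>)) * norm (x1 - x2)) / norm (x1 - x2)) *\<^sub>R (x2 - x1))"

definition frakF :: "real \<Rightarrow> real \<Rightarrow> 'a::{real_inner, second_countable_topology} set \<Rightarrow> 'a
    \<Rightarrow> (('a \<times> real) \<times> ('a \<times> real)) measure \<Rightarrow> ('a \<Rightarrow> 'a) \<Rightarrow> ('a \<Rightarrow> real) \<Rightarrow> real" where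
  "frakF \<Lambda> \<Sigma> X xbar \<beta> v R = (4 / \<Sigma>) *
     (\<integral>pq \<in> cone_set X xbar \<times> cone_set X xbar.
        (let x1 = fst (fst pq); r1 = snd (fst pq); x2 = fst (snd pq); r2 = snd (snd pq);
             k = sqrt (\<Sigma> / (4 * \<Lambda>))
         in - r1\<^sup>2 * R x1 + r1 * r2 * R x1 * cos (k * norm (x1 - x2))
            + r1 * r2 * k * inner (S_LS \<Lambda> \<Sigma> x1 x2) (v x1)) \<partial>\<beta>)"

end

(*
  Transport the optimal plan along the perturbation.  For h in N, moving the first cone point of
  beta0 by (x, r) |-> (x + h v(x), r (1 + h R(x))) gives an admissible plan for (nu_h, mu) whose
  cost C(h) is an explicit integral against beta0, and C(0) = HK^2(nu_0, mu) by optimality.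
  Hence HK^2(nu_h, mu) - HK^2(nu_0, mu) <= C(h) - C(0), so -C'(0)/2 is a Frechet subgradient of
  -HK^2(nu_h, mu)/2 at h = 0, and C'(0) is computed by dominated convergence.

  Differentiating cos(min(k |x1 - x2|, pi)), k = sqrt(Sigma / (4 Lambda)), under the integral
  requires the truncation at pi to be inactive.  Optimality gives this too: beta0-a.e.
  r1 r2 cos(min(k |x1 - x2|, pi)) >= 0, since discarding the part of the plan where it is
  negative would lower the cost; hence k |x1 - x2| <= pi/2 wherever r1 r2 > 0.
*)

theory Submission
  imports Defs
begin

lemma tendsto_integral_at:
  fixes s :: "'c::first_countable_topology \<Rightarrow> 'a \<Rightarrow> 'b::{banach, second_countable_topology}"
  assumes "f \<in> borel_measurable M" "\<And>t. s t \<in> borel_measurable M" "integrable M w"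
    and lim: "AE x in M. ((\<lambda>t. s t x) \<longlongrightarrow> f x) (at a within S)"
    and "\<And>t. AE x in M. norm (s t x) \<le> w x"
  shows "((\<lambda>t. integral\<^sup>L M (s t)) \<longlongrightarrow> integral\<^sup>L M f) (at a within S)"
  unfolding tendsto_at_iff_sequentially
proof (intro allI impI)
  fix T :: "nat \<Rightarrow> 'c" assume T: "\<forall>i. T i \<in> S - {a}" "T \<longlonglongrightarrow> a"
  then have T_at: "filterlim T (at a within S) sequentially"
    by (auto simp: filterlim_at intro!: always_eventually)
  show "((\<lambda>t. integral\<^sup>L M (s t)) \<circ> T) \<longlonglongrightarrow> integral\<^sup>L M f"
    unfolding comp_def
  proof (rule integral_dominated_convergence[where w=w])
    show "AE x in M. (\<lambda>i. s (T i) x) \<longlonglongrightarrow> f x"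
      using lim by eventually_elim (rule filterlim_compose[OF _ T_at])
  qed (use assms in auto)
qed

lemma tendsto_integral_infdist_cutoff:
  fixes L :: "'a::metric_space measure"
  assumes "finite_measure L" and sets_L: "sets L = sets borel" and "closed C" "C \<noteq> {}"
  shows "(\<lambda>n. \<integral>x. max 0 (1 - real n * infdist x C) \<partial>L) \<longlonglongrightarrow> measure L C"
proof -
  interpret finite_measure L by fact
  have C_sets: "C \<in> sets L" using \<open>closed C\<close> sets_L by auto
  have "(\<lambda>n. \<integral>x. max 0 (1 - real n * infdist x C) \<partial>L) \<longlonglongrightarrow> (\<integral>x. indicator C x \<partial>L)"
  proof (rule integral_dominated_convergence[where w="\<lambda>_. 1"])
    show "AE x in L. (\<lambda>n. max 0 (1 - real n * infdist x C)) \<longlonglongrightarrow> indicator C x"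
    proof (intro AE_I2)
      fix x
      show "(\<lambda>n. max 0 (1 - real n * infdist x C)) \<longlonglongrightarrow> indicator C x"
      proof (cases "x \<in> C")
        case False
        then have "infdist x C > 0"
          using in_closed_iff_infdist_zero[OF assms(3,4)] infdist_nonneg[of x C] by auto
        have "\<forall>\<^sub>F n in sequentially. 1 / infdist x C < real n"
          using filterlim_real_sequentially unfolding filterlim_at_top_dense by blast
        then have "\<forall>\<^sub>F n in sequentially. max 0 (1 - real n * infdist x C) = 0"
          by eventually_elim (use \<open>infdist x C > 0\<close> in \<open>auto simp: field_simps\<close>)
        then show ?thesis using False by (simp add: tendsto_eventually)
      qed simp
    qed
    show "AE x in L. norm (max 0 (1 - real n * infdist x C)) \<le> 1" for n
      using infdist_nonneg[of _ C] by (intro AE_I2) simp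
    have "continuous_on UNIV (\<lambda>x. max 0 (1 - real n * infdist x C))" for n
      by (intro continuous_intros)
    then show "(\<lambda>x. max 0 (1 - real n * infdist x C)) \<in> borel_measurable L" for n
      using measurable_cong_sets[OF sets_L refl] borel_measurable_continuous_onI by blast
  qed (use C_sets in auto)
  then show ?thesis using C_sets by simp
qed

lemma finite_measure_if_meas_on:
  assumes "meas_on X M" shows "finite_measure M"
  using assms by (intro finite_measureI) (auto simp: meas_on_def)

lemma set_integral_eq_integral_if_meas_on:
  fixes \<phi> :: "'a::topological_space \<Rightarrow> real"
  assumes "meas_on X M" and "closed X" and "\<phi> \<in> borel_measurable borel"
  shows "(\<integral>x \<in> X. \<phi> x \<partial>M) = (\<integral>x. \<phi> x \<partial>M)"
proof -
  have sets_M: "sets M = sets borel" using assms(1) by (simp add: meas_on_def)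
  have X_sets: "X \<in> sets M" using \<open>closed X\<close> sets_M by simp
  then have "AE x in M. x \<in> X"
    using assms(1) by (intro AE_I[of _ _ "space M - X"]) (auto simp: meas_on_def)
  moreover have "\<phi> \<in> borel_measurable M"
    using assms(3) measurable_cong_sets[OF sets_M refl] by blast
  ultimately show ?thesis
    unfolding set_lebesgue_integral_def
    by (intro integral_cong_AE borel_measurable_scaleR borel_measurable_indicator X_sets) auto
qed

lemma meas_on_eqI_integral_continuous:
  fixes M N :: "'a::metric_space measure"
  assumes "meas_on X M" "meas_on X N" and "closed X"
    and eq: "\<And>\<phi> :: 'a \<Rightarrow> real. continuous_on UNIV \<phi> \<Longrightarrow> (\<And>x. 0 \<le> \<phi> x) \<Longrightarrow> (\<And>x. \<phi> x \<le> 1) \<Longrightarrow>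
        (\<integral>x \<in> X. \<phi> x \<partial>M) = (\<integral>x \<in> X. \<phi> x \<partial>N)"
  shows "M = N"
proof (rule measure_eqI_generator_eq[where E="Collect closed" and \<Omega>=UNIV and A="\<lambda>_. UNIV"])
  have sets_M: "sets M = sets borel" and sets_N: "sets N = sets borel"
    using assms(1,2) by (simp_all add: meas_on_def)
  note finite = finite_measure_if_meas_on[OF assms(1)] finite_measure_if_meas_on[OF assms(2)]
  show "Int_stable (Collect closed)" by (auto simp: Int_stable_def)
  show "sets M = sigma_sets UNIV (Collect closed)" "sets N = sigma_sets UNIV (Collect closed)"
    using sets_M sets_N by (simp_all add: borel_eq_closed)
  show "emeasure M UNIV \<noteq> \<infinity>"
    using finite_measure.emeasure_finite[OF finite(1)] by simp
  fix C :: "'a set" assume "C \<in> Collect closed"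
  show "emeasure M C = emeasure N C"
  proof (cases "C = {}")
    case False
    have "(\<integral>x. max 0 (1 - real n * infdist x C) \<partial>M) = (\<integral>x. max 0 (1 - real n * infdist x C) \<partial>N)" for n
    proof -
      have cont: "continuous_on UNIV (\<lambda>x. max 0 (1 - real n * infdist x C))"
        by (intro continuous_intros)
      have "(\<integral>x \<in> X. max 0 (1 - real n * infdist x C) \<partial>M) = (\<integral>x \<in> X. max 0 (1 - real n * infdist x C) \<partial>N)"
        using infdist_nonneg[of _ C] by (intro eq cont) auto
      then show ?thesis
        using borel_measurable_continuous_onI[OF cont] assms(1-3)
        by (simp add: set_integral_eq_integral_if_meas_on)
    qed
    then have "measure M C = measure N C"
      using tendsto_integral_infdist_cutoff[OF finite(1) sets_M, of C]
        tendsto_integral_infdist_cutoff[OF finite(2) sets_N, of C]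
        \<open>C \<in> Collect closed\<close> False by (auto intro: LIMSEQ_unique)
    then show ?thesis
      using finite by (simp add: finite_measure.emeasure_eq_measure)
  qed simp
qed auto

lemma abs_cos_diff_le: "\<bar>cos a - cos b\<bar> \<le> \<bar>a - (b::real)\<bar>"
proof -
  have "\<bar>cos a - cos b\<bar> = 2 * \<bar>sin ((a + b) / 2)\<bar> * \<bar>sin ((b - a) / 2)\<bar>"
    by (simp add: cos_diff_cos abs_mult)
  also have "\<dots> \<le> 2 * 1 * \<bar>(b - a) / 2\<bar>"
    by (intro mult_mono abs_sin_x_le_abs_x) auto
  finally show ?thesis by simp
qed

lemma one_minus_cos_le: "1 - cos y \<le> (y::real)\<^sup>2 / 2"
proof -
  have "(sin (y / 2))\<^sup>2 \<le> (y / 2)\<^sup>2"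
    using abs_sin_x_le_abs_x[of "y / 2"] by (metis abs_le_square_iff)
  then show ?thesis using cos_double_sin[of "y / 2"] by (simp add: power_divide)
qed

lemma abs_divide_le_if_abs_le_sq:
  fixes a t c :: real
  assumes "\<bar>a\<bar> \<le> c * t\<^sup>2"
  shows "\<bar>a / t\<bar> \<le> c * \<bar>t\<bar>"
proof (cases "t = 0")
  case False
  have "\<bar>a\<bar> \<le> c * \<bar>t\<bar> * \<bar>t\<bar>"
    using assms by (simp add: power2_eq_square mult.assoc)
  then show ?thesis
    using False by (simp add: pos_divide_le_eq)
qed (use assms in simp)

lemma has_real_derivative_cos_norm:
  fixes w u :: "'a::real_inner"
  assumes "w \<noteq> 0"
  shows "((\<lambda>t. cos (c * norm (w + t *\<^sub>R u))) has_real_derivative - sin (c * norm w) * (c * inner u (sgn w))) (at 0)"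
proof -
  have "((\<lambda>t. w + t *\<^sub>R u) has_derivative (\<lambda>s. s *\<^sub>R u)) (at 0)"
    by (auto intro!: derivative_eq_intros)
  moreover have "(norm has_derivative (\<lambda>y. inner y (sgn w))) (at (w + 0 *\<^sub>R u))"
    using has_derivative_norm[OF assms] by simp
  ultimately have "((\<lambda>t. norm (w + t *\<^sub>R u)) has_derivative (\<lambda>s. inner (s *\<^sub>R u) (sgn w))) (at 0)"
    by (rule has_derivative_compose)
  moreover have "(\<lambda>s. inner (s *\<^sub>R u) (sgn w)) = (*) (inner u (sgn w))"
    by (auto simp: mult.commute)
  ultimately have "((\<lambda>t. norm (w + t *\<^sub>R u)) has_real_derivative inner u (sgn w)) (at 0)"
    by (simp add: has_field_derivative_def)
  then show ?thesis
    using DERIV_fun_cos[OF DERIV_cmult] by fastforce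
qed

lemma abs_min_diff_le: "\<bar>min a c - min b c\<bar> \<le> \<bar>a - (b::real)\<bar>"
  by (simp add: min_def abs_if)

lemma abs_mult_le_sum_squares: "\<bar>a * b\<bar> \<le> (a::real)\<^sup>2 + b\<^sup>2"
proof -
  have "2 * (\<bar>a\<bar> * \<bar>b\<bar>) \<le> a\<^sup>2 + b\<^sup>2"
    using sum_squares_bound[of "\<bar>a\<bar>" "\<bar>b\<bar>"] by (simp add: mult.assoc)
  moreover have "0 \<le> \<bar>a\<bar> * \<bar>b\<bar>" by simp
  ultimately have "\<bar>a\<bar> * \<bar>b\<bar> \<le> a\<^sup>2 + b\<^sup>2" by linarith
  then show ?thesis by (simp add: abs_mult)
qed

lemma abs_mult_mult_le_sum_squares:
  assumes "\<bar>z\<bar> \<le> c"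
  shows "\<bar>a * b * z\<bar> \<le> c * ((a::real)\<^sup>2 + b\<^sup>2)"
proof -
  have "\<bar>a * b * z\<bar> = \<bar>a * b\<bar> * \<bar>z\<bar>"
    by (simp add: abs_mult)
  also have "\<dots> \<le> (a\<^sup>2 + b\<^sup>2) * c"
    by (rule mult_mono[OF abs_mult_le_sum_squares assms]) simp_all
  finally show ?thesis
    by (simp only: mult.commute)
qed

lemma frechet_subdiff0I:
  assumes below: "\<forall>\<^sub>F h in at 0. h * q h \<le> f h - f 0" and q: "(q \<longlongrightarrow> \<zeta>) (at 0)"
  shows "\<zeta> \<in> frechet_subdiff0 f"
proof -
  have "\<forall>\<^sub>F h in at 0. ereal (- \<bar>q h - \<zeta>\<bar>) \<le> ereal ((f h - f 0 - \<zeta> * h) / \<bar>h\<bar>)"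
    using below eventually_neq_at_within[of 0 0 UNIV]
  proof eventually_elim
    case (elim h)
    have "- (\<bar>h\<bar> * \<bar>q h - \<zeta>\<bar>) \<le> h * (q h - \<zeta>)"
      using abs_ge_minus_self[of "h * (q h - \<zeta>)"] by (simp add: abs_mult)
    also have "\<dots> \<le> f h - f 0 - \<zeta> * h"
      using elim by (simp add: algebra_simps)
    finally have "- (\<bar>q h - \<zeta>\<bar> * \<bar>h\<bar>) \<le> f h - f 0 - \<zeta> * h" by (simp add: mult.commute)
    then show ?case using elim by (simp add: le_divide_eq)
  qed
  then have "Liminf (at 0) (\<lambda>h. ereal (- \<bar>q h - \<zeta>\<bar>)) \<le> Liminf (at 0) (\<lambda>h. ereal ((f h - f 0 - \<zeta> * h) / \<bar>h\<bar>))"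
    by (rule Liminf_mono)
  moreover have "((\<lambda>h. ereal (- \<bar>q h - \<zeta>\<bar>)) \<longlongrightarrow> ereal (- \<bar>\<zeta> - \<zeta>\<bar>)) (at 0)"
    by (intro tendsto_intros q)
  then have "Liminf (at (0::real)) (\<lambda>h. ereal (- \<bar>q h - \<zeta>\<bar>)) = 0"
    by (intro lim_imp_Liminf) (simp_all add: zero_ereal_def)
  ultimately show ?thesis unfolding frechet_subdiff0_def by simp
qed

section \<open>Cone distance, homogeneous marginals and HK costs\<close>

lemma fst_borel_measurable[measurable]:
  "fst \<in> borel_measurable (borel :: ('a::second_countable_topology \<times> 'b::second_countable_topology) measure)"
  by (intro borel_measurable_continuous_onI continuous_intros)

lemma snd_borel_measurable[measurable]:
  "snd \<in> borel_measurable (borel :: ('a::second_countable_topology \<times> 'b::second_countable_topology) measure)"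
  by (intro borel_measurable_continuous_onI continuous_intros)

lemma cone_d2_vertex: "cone_d2 \<Lambda> \<Sigma> p (cone_vertex xbar) = 4 / \<Sigma> * (snd p)\<^sup>2"
  by (simp add: cone_d2_def cone_vertex_def)

lemma cone_d2_nonneg:
  assumes "\<Sigma> > 0" shows "0 \<le> cone_d2 \<Lambda> \<Sigma> p q"
proof -
  let ?r = "snd p * snd q" and ?c = "cos (min (sqrt (\<Sigma> / (4 * \<Lambda>)) * norm (fst p - fst q)) pi)"
  have "?r * ?c \<le> \<bar>?r\<bar> * \<bar>?c\<bar>"
    using abs_ge_self[of "?r * ?c"] by (simp only: abs_mult)
  also have "\<dots> \<le> \<bar>?r\<bar>"
    by (intro mult_left_le abs_cos_le_one abs_ge_zero)
  finally have "2 * snd p * snd q * ?c \<le> 2 * \<bar>snd p * snd q\<bar>"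
    by (simp add: mult.assoc)
  also have "\<dots> \<le> (snd p)\<^sup>2 + (snd q)\<^sup>2"
    using sum_squares_bound[of "\<bar>snd p\<bar>" "\<bar>snd q\<bar>"] by (simp add: abs_mult mult.assoc)
  finally show ?thesis using assms by (simp add: cone_d2_def)
qed

lemma sets_marg1[simp]: "sets (marg1 \<beta>) = sets borel"
  and space_marg1[simp]: "space (marg1 \<beta>) = UNIV"
  and sets_marg2[simp]: "sets (marg2 \<beta>) = sets borel"
  and space_marg2[simp]: "space (marg2 \<beta>) = UNIV"
  and sets_hmarg[simp]: "sets (hmarg \<alpha>) = sets borel"
  and space_hmarg[simp]: "space (hmarg \<alpha>) = UNIV"
  by (simp_all add: marg1_def marg2_def hmarg_def)

lemma nn_integral_hmarg:
  fixes \<alpha> :: "('a::second_countable_topology \<times> real) measure"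
  assumes sets_\<alpha>: "sets \<alpha> = sets borel" and [measurable]: "w \<in> borel_measurable borel"
  shows "(\<integral>\<^sup>+x. w x \<partial>hmarg \<alpha>) = (\<integral>\<^sup>+p. ennreal ((snd p)\<^sup>2) * w (fst p) \<partial>\<alpha>)"
  unfolding hmarg_def using sets_\<alpha>
  by (subst nn_integral_distr, simp_all add: measurable_cong_sets[OF sets_density refl])
    (subst nn_integral_density, simp_all add: measurable_cong_sets[OF sets_\<alpha> refl])

lemma emeasure_hmarg:
  fixes \<alpha> :: "('a::second_countable_topology \<times> real) measure"
  assumes "sets \<alpha> = sets borel" and [measurable]: "A \<in> sets borel"
  shows "emeasure (hmarg \<alpha>) A = (\<integral>\<^sup>+p. ennreal ((snd p)\<^sup>2) * indicator A (fst p) \<partial>\<alpha>)"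
  using nn_integral_hmarg[OF assms(1), of "indicator A"] by simp

lemma integral_hmarg:
  fixes \<alpha> :: "('a::second_countable_topology \<times> real) measure" and f :: "'a \<Rightarrow> real"
  assumes sets_\<alpha>: "sets \<alpha> = sets borel" and [measurable]: "f \<in> borel_measurable borel"
  shows "(\<integral>x. f x \<partial>hmarg \<alpha>) = (\<integral>p. (snd p)\<^sup>2 * f (fst p) \<partial>\<alpha>)"
proof -
  have "(\<integral>x. f x \<partial>hmarg \<alpha>) = (\<integral>p. f (fst p) \<partial>density \<alpha> (\<lambda>p. ennreal ((snd p)\<^sup>2)))"
    unfolding hmarg_def
    by (rule integral_distr) (simp_all add: measurable_cong_sets[OF sets_density refl] measurable_cong_sets[OF sets_\<alpha> refl])
  also have "\<dots> = (\<integral>p. (snd p)\<^sup>2 * f (fst p) \<partial>\<alpha>)"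
    by (subst integral_density) (simp_all add: measurable_cong_sets[OF sets_\<alpha> refl])
  finally show ?thesis .
qed

lemma cone_M2_integrable_radius_sq:
  fixes \<alpha> :: "('a::{real_normed_vector, second_countable_topology} \<times> real) measure"
  assumes "cone_M2 \<Lambda> \<Sigma> X xbar \<alpha>" and "\<Sigma> > 0"
  shows "integrable \<alpha> (\<lambda>p. (snd p)\<^sup>2)"
proof -
  have sets_\<alpha>: "sets \<alpha> = sets borel" and moment: "(\<integral>\<^sup>+p. ennreal (4 / \<Sigma> * (snd p)\<^sup>2) \<partial>\<alpha>) < \<infinity>"
    using assms(1) by (simp_all add: cone_M2_def cone_d2_vertex)
  have "(\<lambda>p. 4 / \<Sigma> * (snd p)\<^sup>2) \<in> borel_measurable \<alpha>"
    unfolding measurable_cong_sets[OF sets_\<alpha> refl] by measurable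
  then have "integrable \<alpha> (\<lambda>p. 4 / \<Sigma> * (snd p)\<^sup>2)"
    using moment \<open>\<Sigma> > 0\<close> by (intro integrableI_nonneg) (auto simp: less_top)
  then have "integrable \<alpha> (\<lambda>p. \<Sigma> / 4 * (4 / \<Sigma> * (snd p)\<^sup>2))"
    by (rule integrable_mult_right)
  then show ?thesis using \<open>\<Sigma> > 0\<close> by simp
qed

lemma le_measure_if_meas_le:
  assumes "meas_le M N" and "sets M = sets N"
  shows "M \<le> N"
proof -
  have "emeasure M A \<le> emeasure N A" for A
    using assms by (cases "A \<in> sets M") (auto simp: meas_le_def emeasure_notin_sets)
  then show ?thesis
    using assms(2) sets_eq_imp_space_eq[OF assms(2)] by (simp add: le_measure_iff le_fun_def)
qed

lemma measure_hmarg_le_if_meas_le: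
  assumes "meas_le (hmarg \<alpha>) M" and "meas_on X M"
  shows "measure (hmarg \<alpha>) UNIV \<le> measure M (space M)"
proof -
  have "space M = UNIV" and "emeasure M (space M) < \<infinity>"
    using assms(2) sets_eq_imp_space_eq[of M borel] by (auto simp: meas_on_def)
  moreover have "emeasure (hmarg \<alpha>) UNIV \<le> emeasure M UNIV"
    using assms(1) by (auto simp: meas_le_def)
  ultimately show ?thesis by (simp add: measure_def enn2real_mono)
qed

lemma HK_cost_nonneg:
  assumes "HK_admissible \<Lambda> \<Sigma> X xbar M1 M2 \<beta>" "meas_on X M1" "meas_on X M2" "\<Sigma> > 0"
  shows "0 \<le> HK_cost \<Lambda> \<Sigma> M1 M2 \<beta>"
proof -
  have "0 \<le> (\<integral>pq. cone_d2 \<Lambda> \<Sigma> (fst pq) (snd pq) \<partial>\<beta>)"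
    using cone_d2_nonneg[OF \<open>\<Sigma> > 0\<close>] by (intro integral_nonneg_AE AE_I2)
  moreover have "measure (hmarg (marg1 \<beta>)) UNIV \<le> measure M1 (space M1)"
    and "measure (hmarg (marg2 \<beta>)) UNIV \<le> measure M2 (space M2)"
    using assms by (auto intro!: measure_hmarg_le_if_meas_le simp: HK_admissible_def)
  ultimately show ?thesis using \<open>\<Sigma> > 0\<close> by (simp add: HK_cost_def)
qed

lemma HK2_le_HK_cost:
  assumes "HK_admissible \<Lambda> \<Sigma> X xbar M1 M2 \<beta>" "meas_on X M1" "meas_on X M2" "\<Sigma> > 0"
  shows "HK2 \<Lambda> \<Sigma> X xbar M1 M2 \<le> HK_cost \<Lambda> \<Sigma> M1 M2 \<beta>"
  unfolding HK2_def
proof (rule cInf_lower)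
  show "bdd_below (HK_cost \<Lambda> \<Sigma> M1 M2 ` {\<beta>. HK_admissible \<Lambda> \<Sigma> X xbar M1 M2 \<beta>})"
    using HK_cost_nonneg assms(2-4) by (intro bdd_belowI[where m=0]) auto
qed (use assms(1) in auto)

lemma HK2_eq_HK_cost_if_optimal:
  assumes "HK_optimal \<Lambda> \<Sigma> X xbar M1 M2 \<beta>"
  shows "HK2 \<Lambda> \<Sigma> X xbar M1 M2 = HK_cost \<Lambda> \<Sigma> M1 M2 \<beta>"
  using assms unfolding HK2_def HK_optimal_def by (intro cInf_eq_minimum) auto

section \<open>The perturbed measures\<close>

locale HK_perturbation =
  fixes X :: "'a::{real_inner, second_countable_topology} set"
    and xbar :: 'a
    and \<Lambda> \<Sigma> :: real
    and v :: "'a \<Rightarrow> 'a" and R :: "'a \<Rightarrow> real"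
    and N :: "real set"
    and \<nu>0 \<mu> :: "'a measure" and \<nu> :: "real \<Rightarrow> 'a measure"
    and \<beta>0 :: "(('a \<times> real) \<times> ('a \<times> real)) measure"
  assumes closed_X: "closed X" and xbar_in_X: "xbar \<in> X"
    and Lambda_pos: "\<Lambda> > 0" and Sigma_pos: "\<Sigma> > 0"
    and v_measurable: "v \<in> borel_measurable (restrict_space borel X)" and v_bounded: "bounded (v ` X)"
    and R_measurable: "R \<in> borel_measurable (restrict_space borel X)" and R_bounded: "bounded (R ` X)"
    and zero_in_interior: "0 \<in> interior N"
    and perturbation_stays: "\<And>h x. h \<in> N \<Longrightarrow> x \<in> X \<Longrightarrow> x + h *\<^sub>R v x \<in> X \<and> 1 + h * R x > 0"
    and nu0_on_X: "meas_on X \<nu>0"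
    and nu_on_X: "\<And>h. h \<in> N \<Longrightarrow> meas_on X (\<nu> h)"
    and integral_nu: "\<And>h \<phi>. h \<in> N \<Longrightarrow> continuous_on X \<phi> \<Longrightarrow> bounded (\<phi> ` X) \<Longrightarrow>
           (\<integral>x \<in> X. (\<phi> x :: real) \<partial>(\<nu> h))
             = (\<integral>x \<in> X. \<phi> (x + h *\<^sub>R v x) * (1 + h * R x)\<^sup>2 \<partial>\<nu>0)"
    and mu_on_X: "meas_on X \<mu>"
    and optimal: "HK_optimal \<Lambda> \<Sigma> X xbar \<nu>0 \<mu> \<beta>0"
begin

abbreviation cone :: "('a \<times> real) set" where
  "cone \<equiv> cone_set X xbar"

definition "k = sqrt (\<Sigma> / (4 * \<Lambda>))"

text \<open>\<open>R\<close> and \<open>v\<close> extended by zero outside \<open>X\<close>, so that all maps below are Borel on the whole space.\<close>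

definition "R0 x = indicator X x * R x"
definition "v0 x = indicator X x *\<^sub>R v x"

definition "R_bound = (SOME B. 0 \<le> B \<and> (\<forall>x. \<bar>R0 x\<bar> \<le> B))"
definition "v_bound = (SOME B. 0 \<le> B \<and> (\<forall>x. norm (v0 x) \<le> B))"

definition shift :: "real \<Rightarrow> 'a \<times> real \<Rightarrow> 'a \<times> real" where
  "shift h p = (if fst p \<in> X \<and> 0 < snd p
     then (fst p + h *\<^sub>R v0 (fst p), snd p * (1 + h * R0 (fst p))) else (xbar, 0))"

definition "weight h x = indicator X x * (1 + h * R0 x)\<^sup>2"

definition "pushforward_nu h = distr (density \<nu>0 (\<lambda>x. ennreal (weight h x))) borel (\<lambda>x. x + h *\<^sub>R v0 x)"

lemma X_sets[measurable]: "X \<in> sets borel"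
  using closed_X by simp

lemma R0_measurable[measurable]: "R0 \<in> borel_measurable borel"
  using R_measurable borel_measurable_restrict_space_iff[of X borel R]
  by (simp add: R0_def[abs_def])

lemma v0_measurable[measurable]: "v0 \<in> borel_measurable borel"
  using v_measurable borel_measurable_restrict_space_iff[of X borel v]
  by (simp add: v0_def[abs_def])

lemma R_bound: "0 \<le> R_bound" "\<bar>R0 x\<bar> \<le> R_bound"
proof -
  obtain B where "\<forall>y\<in>R ` X. norm y \<le> B" using R_bounded by (auto simp: bounded_iff)
  then have "0 \<le> max B 0 \<and> (\<forall>x. \<bar>R0 x\<bar> \<le> max B 0)"
    by (auto simp: R0_def indicator_def)
  then have "0 \<le> R_bound \<and> (\<forall>x. \<bar>R0 x\<bar> \<le> R_bound)"
    unfolding R_bound_def by (rule someI)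
  then show "0 \<le> R_bound" "\<bar>R0 x\<bar> \<le> R_bound" by auto
qed

lemma v_bound: "0 \<le> v_bound" "norm (v0 x) \<le> v_bound"
proof -
  obtain B where "\<forall>y\<in>v ` X. norm y \<le> B" using v_bounded by (auto simp: bounded_iff)
  then have "0 \<le> max B 0 \<and> (\<forall>x. norm (v0 x) \<le> max B 0)"
    by (auto simp: v0_def indicator_def)
  then have "0 \<le> v_bound \<and> (\<forall>x. norm (v0 x) \<le> v_bound)"
    unfolding v_bound_def by (rule someI)
  then show "0 \<le> v_bound" "norm (v0 x) \<le> v_bound" by auto
qed

lemma abs_one_plus_R0_le: "\<bar>1 + h * R0 x\<bar> \<le> 1 + \<bar>h\<bar> * R_bound"
  using abs_triangle_ineq[of 1 "h * R0 x"] mult_left_mono[OF R_bound(2)[of x] abs_ge_zero[of h]]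
  by (simp add: abs_mult)

lemma one_plus_R0_sq_le: "(1 + h * R0 x)\<^sup>2 \<le> (1 + \<bar>h\<bar> * R_bound)\<^sup>2"
  using power_mono[OF abs_one_plus_R0_le[of h x] abs_ge_zero, of 2] by simp

lemma zero_in_N: "0 \<in> N"
  using zero_in_interior interior_subset by blast

lemma cone_sets[measurable]: "cone \<in> sets borel"
proof -
  have "cone = {p. fst p \<in> X \<and> 0 < snd p} \<union> {(xbar, 0)}"
    by (auto simp: cone_set_def)
  also have "\<dots> \<in> sets borel" by measurable
  finally show ?thesis .
qed

lemma cone_times_cone_sets[measurable]: "cone \<times> cone \<in> sets borel"
proof -
  have "cone \<times> cone = {pq. fst pq \<in> cone \<and> snd pq \<in> cone}" by auto
  also have "\<dots> \<in> sets borel" by measurable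
  finally show ?thesis .
qed

lemma shift_measurable[measurable]: "shift h \<in> borel_measurable borel"
  unfolding shift_def[abs_def] by measurable

lemma shift_fst_measurable[measurable]:
  "(\<lambda>pq :: ('a \<times> real) \<times> ('a \<times> real). (shift h (fst pq), snd pq)) \<in> borel_measurable borel"
  by measurable

lemma shift_in_cone: "h \<in> N \<Longrightarrow> shift h p \<in> cone"
  using perturbation_stays[of h "fst p"] xbar_in_X
  by (auto simp: shift_def cone_set_def v0_def R0_def)

lemma shift_zero: "p \<in> cone \<Longrightarrow> shift 0 p = p"
  by (auto simp: shift_def cone_set_def)

lemma snd_shift_sq_le: "(snd (shift h p))\<^sup>2 \<le> (1 + \<bar>h\<bar> * R_bound)\<^sup>2 * (snd p)\<^sup>2"
  using one_plus_R0_sq_le[of h "fst p"]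
  by (auto simp: shift_def power_mult_distrib mult.commute intro: mult_left_mono)

lemma admissible_beta0: "HK_admissible \<Lambda> \<Sigma> X xbar \<nu>0 \<mu> \<beta>0"
  using optimal by (simp add: HK_optimal_def)

lemma sets_beta0[measurable_cong]: "sets \<beta>0 = sets borel"
  using admissible_beta0 by (simp add: HK_admissible_def)

lemma space_beta0[simp]: "space \<beta>0 = UNIV"
  using sets_eq_imp_space_eq[OF sets_beta0] by simp

lemma emeasure_beta0_finite: "emeasure \<beta>0 UNIV < \<infinity>"
  using admissible_beta0 by (simp add: HK_admissible_def)

lemma emeasure_beta0_outside_cone: "emeasure \<beta>0 (UNIV - cone \<times> cone) = 0"
  using admissible_beta0 by (simp add: HK_admissible_def)

lemma AE_beta0_cone: "AE pq in \<beta>0. pq \<in> cone \<times> cone"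
  using emeasure_beta0_outside_cone by (intro AE_I[of _ _ "UNIV - cone \<times> cone"]) auto

lemma sets_nu0[measurable_cong]: "sets \<nu>0 = sets borel"
  using nu0_on_X by (simp add: meas_on_def)

lemma space_nu0[simp]: "space \<nu>0 = UNIV"
  using sets_eq_imp_space_eq[OF sets_nu0] by simp

lemma integrable_beta0_radius_sq:
  "integrable \<beta>0 (\<lambda>pq. (snd (fst pq))\<^sup>2)" "integrable \<beta>0 (\<lambda>pq. (snd (snd pq))\<^sup>2)"
proof -
  have "integrable (marg1 \<beta>0) (\<lambda>p. (snd p)\<^sup>2)" "integrable (marg2 \<beta>0) (\<lambda>p. (snd p)\<^sup>2)"
    using admissible_beta0 Sigma_pos
    by (auto intro!: cone_M2_integrable_radius_sq simp: HK_admissible_def)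
  then show "integrable \<beta>0 (\<lambda>pq. (snd (fst pq))\<^sup>2)" "integrable \<beta>0 (\<lambda>pq. (snd (snd pq))\<^sup>2)"
    by (simp_all add: marg1_def marg2_def integrable_distr_eq)
qed

lemma integrable_beta0_dominated:
  assumes [measurable]: "f \<in> borel_measurable borel"
    and bound: "\<And>pq. \<bar>f pq\<bar> \<le> c * ((snd (fst pq))\<^sup>2 + (snd (snd pq))\<^sup>2)"
  shows "integrable \<beta>0 f"
proof (rule Bochner_Integration.integrable_bound)
  show "integrable \<beta>0 (\<lambda>pq. c * ((snd (fst pq))\<^sup>2 + (snd (snd pq))\<^sup>2))"
    using integrable_beta0_radius_sq by simp
  show "AE pq in \<beta>0. norm (f pq) \<le> norm (c * ((snd (fst pq))\<^sup>2 + (snd (snd pq))\<^sup>2))"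
    by (intro AE_I2, simp only: real_norm_def) (rule order_trans[OF bound abs_ge_self])
qed simp

lemma weight_measurable[measurable]: "weight h \<in> borel_measurable borel"
  unfolding weight_def[abs_def] by measurable

lemma weight_le: "weight h x \<le> (1 + \<bar>h\<bar> * R_bound)\<^sup>2"
  using one_plus_R0_sq_le[of h x] by (simp add: weight_def indicator_def)

lemma sets_pushforward_nu[simp]: "sets (pushforward_nu h) = sets borel"
  and space_pushforward_nu[simp]: "space (pushforward_nu h) = UNIV"
  by (simp_all add: pushforward_nu_def)

lemma nn_integral_pushforward_nu:
  assumes [measurable]: "f \<in> borel_measurable borel"
  shows "(\<integral>\<^sup>+x. f x \<partial>pushforward_nu h) = (\<integral>\<^sup>+x. ennreal (weight h x) * f (x + h *\<^sub>R v0 x) \<partial>\<nu>0)"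
proof -
  have "(\<integral>\<^sup>+x. f x \<partial>pushforward_nu h) = (\<integral>\<^sup>+x. f (x + h *\<^sub>R v0 x) \<partial>density \<nu>0 (\<lambda>x. ennreal (weight h x)))"
    unfolding pushforward_nu_def by (rule nn_integral_distr) measurable
  also have "\<dots> = (\<integral>\<^sup>+x. ennreal (weight h x) * f (x + h *\<^sub>R v0 x) \<partial>\<nu>0)"
    by (rule nn_integral_density) measurable
  finally show ?thesis .
qed

lemma meas_on_pushforward_nu:
  assumes "h \<in> N" shows "meas_on X (pushforward_nu h)"
proof -
  interpret finite_measure \<nu>0 using finite_measure_if_meas_on[OF nu0_on_X] .
  have "emeasure (pushforward_nu h) UNIV = (\<integral>\<^sup>+x. ennreal (weight h x) \<partial>\<nu>0)"
    using nn_integral_pushforward_nu[of "\<lambda>_. 1" h] by simp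
  also have "\<dots> \<le> (\<integral>\<^sup>+x. ennreal ((1 + \<bar>h\<bar> * R_bound)\<^sup>2) \<partial>\<nu>0)"
    by (intro nn_integral_mono ennreal_leI weight_le)
  also have "\<dots> < \<infinity>"
    using emeasure_finite[of UNIV] by (simp add: ennreal_mult_eq_top_iff less_top[symmetric])
  finally have finite: "emeasure (pushforward_nu h) UNIV < \<infinity>" .
  have "emeasure (pushforward_nu h) (UNIV - X)
      = (\<integral>\<^sup>+x. ennreal (weight h x) * indicator (UNIV - X) (x + h *\<^sub>R v0 x) \<partial>\<nu>0)"
    using nn_integral_pushforward_nu[of "indicator (UNIV - X)" h] by simp
  also have "\<dots> = (\<integral>\<^sup>+x. 0 \<partial>\<nu>0)"
    using perturbation_stays[OF assms]
    by (intro nn_integral_cong) (simp add: weight_def v0_def indicator_def)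
  finally have null: "emeasure (pushforward_nu h) (UNIV - X) = 0" by simp
  show ?thesis using finite null by (simp add: meas_on_def)
qed

lemma set_integral_pushforward_nu:
  fixes \<phi> :: "'a \<Rightarrow> real"
  assumes "h \<in> N" and [measurable]: "\<phi> \<in> borel_measurable borel"
  shows "(\<integral>x \<in> X. \<phi> x \<partial>pushforward_nu h) = (\<integral>x \<in> X. \<phi> (x + h *\<^sub>R v x) * (1 + h * R x)\<^sup>2 \<partial>\<nu>0)"
proof -
  have "(\<integral>x \<in> X. \<phi> x \<partial>pushforward_nu h)
      = (\<integral>x. weight h x * (indicator X (x + h *\<^sub>R v0 x) * \<phi> (x + h *\<^sub>R v0 x)) \<partial>\<nu>0)"
    unfolding set_lebesgue_integral_def pushforward_nu_def
    by (subst integral_distr) (simp_all add: integral_density weight_def)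
  also have "\<dots> = (\<integral>x \<in> X. \<phi> (x + h *\<^sub>R v x) * (1 + h * R x)\<^sup>2 \<partial>\<nu>0)"
    unfolding set_lebesgue_integral_def using perturbation_stays[OF assms(1)]
    by (intro Bochner_Integration.integral_cong) (auto simp: weight_def v0_def R0_def indicator_def)
  finally show ?thesis .
qed

lemma nu_eq_pushforward_nu:
  assumes "h \<in> N" shows "\<nu> h = pushforward_nu h"
proof (rule meas_on_eqI_integral_continuous[OF nu_on_X[OF assms] meas_on_pushforward_nu[OF assms] closed_X])
  fix \<phi> :: "'a \<Rightarrow> real" assume \<phi>: "continuous_on UNIV \<phi>" "\<And>x. 0 \<le> \<phi> x" "\<And>x. \<phi> x \<le> 1"
  moreover have "bounded (\<phi> ` X)"
    using \<phi>(2,3) by (intro boundedI[where B=1]) auto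
  ultimately show "(\<integral>x \<in> X. \<phi> x \<partial>\<nu> h) = (\<integral>x \<in> X. \<phi> x \<partial>pushforward_nu h)"
    using assms by (simp add: integral_nu continuous_on_subset set_integral_pushforward_nu
        borel_measurable_continuous_onI)
qed

lemma nu_zero: "\<nu> 0 = \<nu>0"
proof (rule meas_on_eqI_integral_continuous[OF nu_on_X[OF zero_in_N] nu0_on_X closed_X])
  fix \<phi> :: "'a \<Rightarrow> real" assume \<phi>: "continuous_on UNIV \<phi>" "\<And>x. 0 \<le> \<phi> x" "\<And>x. \<phi> x \<le> 1"
  moreover have "bounded (\<phi> ` X)"
    using \<phi>(2,3) by (intro boundedI[where B=1]) auto
  ultimately show "(\<integral>x \<in> X. \<phi> x \<partial>\<nu> 0) = (\<integral>x \<in> X. \<phi> x \<partial>\<nu>0)"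
    using integral_nu[OF zero_in_N] by (simp add: continuous_on_subset)
qed

section \<open>Transported plans\<close>

text \<open>\<open>plan h G\<close> is \<open>\<beta>0\<close> restricted to \<open>G\<close> with its first cone point moved by \<open>shift h\<close>:
  \<open>G = UNIV\<close> bounds \<open>HK(\<nu>\<^sub>h, \<mu>)\<close> from above, other \<open>G\<close> test the optimality of \<open>\<beta>0\<close>.\<close>

definition "plan h G = distr (density \<beta>0 (indicator G)) borel (\<lambda>pq. (shift h (fst pq), snd pq))"

definition cos_term :: "real \<Rightarrow> ('a \<times> real) \<times> ('a \<times> real) \<Rightarrow> real" where
  "cos_term h pq = cos (min (k * norm (fst (fst pq) - fst (snd pq) + h *\<^sub>R v0 (fst (fst pq)))) pi)"

definition cross :: "real \<Rightarrow> ('a \<times> real) \<times> ('a \<times> real) \<Rightarrow> real" where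
  "cross h pq = snd (fst pq) * snd (snd pq) * (1 + h * R0 (fst (fst pq))) * cos_term h pq"

definition "cost h G = 4 / \<Sigma> * ((\<integral>x. weight h x \<partial>\<nu>0) + measure \<mu> (space \<mu>))
    - 8 / \<Sigma> * (\<integral>pq. indicator G pq * cross h pq \<partial>\<beta>0)"

lemma sets_plan[simp, measurable_cong]: "sets (plan h G) = sets borel"
  by (simp add: plan_def)

lemma space_plan[simp]: "space (plan h G) = UNIV"
  by (simp add: plan_def)

lemma cos_term_measurable[measurable]: "cos_term h \<in> borel_measurable borel"
  unfolding cos_term_def[abs_def] by measurable

lemma cross_measurable[measurable]: "cross h \<in> borel_measurable borel"
  unfolding cross_def[abs_def] by measurable

lemma abs_cos_term_le: "\<bar>cos_term h pq\<bar> \<le> 1"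
  by (simp add: cos_term_def)

lemma nn_integral_plan:
  assumes [measurable]: "G \<in> sets borel" "f \<in> borel_measurable borel"
  shows "(\<integral>\<^sup>+pq. f pq \<partial>plan h G) = (\<integral>\<^sup>+pq. indicator G pq * f (shift h (fst pq), snd pq) \<partial>\<beta>0)"
proof -
  have "(\<integral>\<^sup>+pq. f pq \<partial>plan h G) = (\<integral>\<^sup>+pq. f (shift h (fst pq), snd pq) \<partial>density \<beta>0 (indicator G))"
    unfolding plan_def by (rule nn_integral_distr) measurable
  also have "\<dots> = (\<integral>\<^sup>+pq. indicator G pq * f (shift h (fst pq), snd pq) \<partial>\<beta>0)"
    by (rule nn_integral_density) measurable
  finally show ?thesis .
qed

lemma integral_plan:
  fixes f :: "('a \<times> real) \<times> ('a \<times> real) \<Rightarrow> real"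
  assumes [measurable]: "G \<in> sets borel" "f \<in> borel_measurable borel"
  shows "(\<integral>pq. f pq \<partial>plan h G) = (\<integral>pq. indicator G pq * f (shift h (fst pq), snd pq) \<partial>\<beta>0)"
proof -
  have "(\<integral>pq. f pq \<partial>plan h G) = (\<integral>pq. f (shift h (fst pq), snd pq) \<partial>density \<beta>0 (\<lambda>pq. ennreal (indicator G pq)))"
    unfolding plan_def ennreal_indicator by (rule integral_distr) measurable
  also have "\<dots> = (\<integral>pq. indicator G pq * f (shift h (fst pq), snd pq) \<partial>\<beta>0)"
    by (subst integral_density) simp_all
  finally show ?thesis .
qed

lemma nn_integral_marg1_plan:
  assumes [measurable]: "G \<in> sets borel" "f \<in> borel_measurable borel"
  shows "(\<integral>\<^sup>+p. f p \<partial>marg1 (plan h G)) = (\<integral>\<^sup>+pq. indicator G pq * f (shift h (fst pq)) \<partial>\<beta>0)"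
  unfolding marg1_def by (subst nn_integral_distr) (simp_all add: nn_integral_plan[OF assms(1)])

lemma nn_integral_marg2_plan:
  assumes [measurable]: "G \<in> sets borel" "f \<in> borel_measurable borel"
  shows "(\<integral>\<^sup>+p. f p \<partial>marg2 (plan h G)) = (\<integral>\<^sup>+pq. indicator G pq * f (snd pq) \<partial>\<beta>0)"
  unfolding marg2_def by (subst nn_integral_distr) (simp_all add: nn_integral_plan[OF assms(1)])

lemma nn_integral_beta0_radius_sq_finite:
  assumes "0 \<le> c"
  shows "(\<integral>\<^sup>+pq. ennreal (c * (snd (fst pq))\<^sup>2) \<partial>\<beta>0) < \<infinity>"
    and "(\<integral>\<^sup>+pq. ennreal (c * (snd (snd pq))\<^sup>2) \<partial>\<beta>0) < \<infinity>"
  using integrable_mult_right[OF integrable_beta0_radius_sq(1), of c]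
    integrable_mult_right[OF integrable_beta0_radius_sq(2), of c] assms
  by (simp_all add: nn_integral_eq_integral)

lemma indicator_mult_le: "(indicator G x :: ennreal) * y \<le> y"
  by (cases "x \<in> G") auto

lemma emeasure_plan_finite:
  assumes "G \<in> sets borel" shows "emeasure (plan h G) UNIV < \<infinity>"
proof -
  have "emeasure (plan h G) UNIV = (\<integral>\<^sup>+pq. indicator G pq * 1 \<partial>\<beta>0)"
    using nn_integral_plan[OF assms, of "\<lambda>_. 1" h] by simp
  also have "\<dots> \<le> (\<integral>\<^sup>+pq. 1 \<partial>\<beta>0)"
    by (intro nn_integral_mono indicator_mult_le)
  finally show ?thesis using emeasure_beta0_finite by simp
qed

lemma emeasure_plan_outside_cone:
  assumes "h \<in> N" "G \<in> sets borel"
  shows "emeasure (plan h G) (UNIV - cone \<times> cone) = 0"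
proof -
  have "emeasure (plan h G) (UNIV - cone \<times> cone)
      = (\<integral>\<^sup>+pq. indicator G pq * indicator (UNIV - cone \<times> cone) (shift h (fst pq), snd pq) \<partial>\<beta>0)"
    using nn_integral_plan[OF assms(2), of "indicator (UNIV - cone \<times> cone)" h] by simp
  also have "\<dots> \<le> (\<integral>\<^sup>+pq. indicator (UNIV - cone \<times> cone) pq \<partial>\<beta>0)"
    using shift_in_cone[OF assms(1)] by (intro nn_integral_mono) (simp add: indicator_def mem_Times_iff)
  also have "\<dots> = 0"
    using emeasure_beta0_outside_cone by simp
  finally show ?thesis by simp
qed

lemma cone_M2_marg1_plan:
  assumes "h \<in> N" and G[measurable]: "G \<in> sets borel"
  shows "cone_M2 \<Lambda> \<Sigma> X xbar (marg1 (plan h G))"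
proof -
  have finite: "emeasure (marg1 (plan h G)) UNIV < \<infinity>"
    using emeasure_plan_finite[OF G] by (simp add: marg1_def emeasure_distr)
  have "emeasure (marg1 (plan h G)) (UNIV - cone)
      = (\<integral>\<^sup>+pq. indicator G pq * indicator (UNIV - cone) (shift h (fst pq)) \<partial>\<beta>0)"
    using nn_integral_marg1_plan[OF G, of "indicator (UNIV - cone)" h] by simp
  then have null: "emeasure (marg1 (plan h G)) (UNIV - cone) = 0"
    using shift_in_cone[OF assms(1)] by simp
  have "(\<integral>\<^sup>+p. ennreal (4 / \<Sigma> * (snd p)\<^sup>2) \<partial>marg1 (plan h G))
      = (\<integral>\<^sup>+pq. indicator G pq * ennreal (4 / \<Sigma> * (snd (shift h (fst pq)))\<^sup>2) \<partial>\<beta>0)"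
    by (rule nn_integral_marg1_plan) measurable
  also have "\<dots> \<le> (\<integral>\<^sup>+pq. ennreal (4 / \<Sigma> * ((1 + \<bar>h\<bar> * R_bound)\<^sup>2 * (snd (fst pq))\<^sup>2)) \<partial>\<beta>0)"
    using Sigma_pos
    by (intro nn_integral_mono order_trans[OF indicator_mult_le] ennreal_leI mult_left_mono snd_shift_sq_le)
      simp
  also have "\<dots> < \<infinity>"
    using nn_integral_beta0_radius_sq_finite(1)[of "4 / \<Sigma> * (1 + \<bar>h\<bar> * R_bound)\<^sup>2"] Sigma_pos
    by (simp add: mult.assoc)
  finally show ?thesis
    using finite null by (simp add: cone_M2_def cone_d2_vertex)
qed

lemma cone_M2_marg2_plan:
  assumes G[measurable]: "G \<in> sets borel"
  shows "cone_M2 \<Lambda> \<Sigma> X xbar (marg2 (plan h G))"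
proof -
  have finite: "emeasure (marg2 (plan h G)) UNIV < \<infinity>"
    using emeasure_plan_finite[OF G] by (simp add: marg2_def emeasure_distr)
  have "emeasure (marg2 (plan h G)) (UNIV - cone)
      = (\<integral>\<^sup>+pq. indicator G pq * indicator (UNIV - cone) (snd pq) \<partial>\<beta>0)"
    using nn_integral_marg2_plan[OF G, of "indicator (UNIV - cone)" h] by simp
  also have "\<dots> \<le> (\<integral>\<^sup>+pq. indicator (UNIV - cone \<times> cone) pq \<partial>\<beta>0)"
    by (intro nn_integral_mono order_trans[OF indicator_mult_le]) (simp add: indicator_def mem_Times_iff)
  also have "\<dots> = 0"
    using emeasure_beta0_outside_cone by simp
  finally have null: "emeasure (marg2 (plan h G)) (UNIV - cone) = 0" by simp
  have "(\<integral>\<^sup>+p. ennreal (4 / \<Sigma> * (snd p)\<^sup>2) \<partial>marg2 (plan h G))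
      = (\<integral>\<^sup>+pq. indicator G pq * ennreal (4 / \<Sigma> * (snd (snd pq))\<^sup>2) \<partial>\<beta>0)"
    by (rule nn_integral_marg2_plan) measurable
  also have "\<dots> \<le> (\<integral>\<^sup>+pq. ennreal (4 / \<Sigma> * (snd (snd pq))\<^sup>2) \<partial>\<beta>0)"
    by (intro nn_integral_mono indicator_mult_le)
  also have "\<dots> < \<infinity>"
    using nn_integral_beta0_radius_sq_finite(2)[of "4 / \<Sigma>"] Sigma_pos by simp
  finally show ?thesis
    using finite null by (simp add: cone_M2_def cone_d2_vertex)
qed

lemma hmarg_marg1_plan_le:
  assumes h: "h \<in> N" and G[measurable]: "G \<in> sets borel"
  shows "meas_le (hmarg (marg1 (plan h G))) (\<nu> h)"
  unfolding meas_le_def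
proof
  fix A assume "A \<in> sets (hmarg (marg1 (plan h G)))"
  then have A[measurable]: "A \<in> sets borel" by simp
  define w where "w x = ennreal (weight h x) * indicator A (x + h *\<^sub>R v0 x)" for x
  have [measurable]: "w \<in> borel_measurable borel" unfolding w_def[abs_def] by measurable
  have "emeasure (hmarg (marg1 (plan h G))) A
      = (\<integral>\<^sup>+pq. indicator G pq * (ennreal ((snd (shift h (fst pq)))\<^sup>2) * indicator A (fst (shift h (fst pq)))) \<partial>\<beta>0)"
    by (simp add: emeasure_hmarg nn_integral_marg1_plan)
  also have "\<dots> \<le> (\<integral>\<^sup>+pq. ennreal ((snd (fst pq))\<^sup>2) * w (fst (fst pq)) \<partial>\<beta>0)"
  proof (intro nn_integral_mono order_trans[OF indicator_mult_le])
    fix pq :: "('a \<times> real) \<times> ('a \<times> real)"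
    obtain x r where p: "fst pq = (x, r)" by fastforce
    show "ennreal ((snd (shift h (fst pq)))\<^sup>2) * indicator A (fst (shift h (fst pq)))
        \<le> ennreal ((snd (fst pq))\<^sup>2) * w (fst (fst pq))"
      by (cases "x \<in> X \<and> 0 < r")
        (simp_all add: p shift_def w_def weight_def power_mult_distrib ennreal_mult' mult.assoc)
  qed
  also have "\<dots> = (\<integral>\<^sup>+x. w x \<partial>hmarg (marg1 \<beta>0))"
    by (simp add: nn_integral_hmarg marg1_def nn_integral_distr)
  also have "\<dots> \<le> (\<integral>\<^sup>+x. w x \<partial>\<nu>0)"
    using admissible_beta0
    by (intro nn_integral_mono_measure le_measure_if_meas_le) (simp_all add: HK_admissible_def sets_nu0)
  also have "\<dots> = emeasure (\<nu> h) A"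
    using nn_integral_pushforward_nu[of "indicator A" h] by (simp add: nu_eq_pushforward_nu[OF h] w_def)
  finally show "emeasure (hmarg (marg1 (plan h G))) A \<le> emeasure (\<nu> h) A" .
qed

lemma hmarg_marg2_plan_le:
  assumes G[measurable]: "G \<in> sets borel"
  shows "meas_le (hmarg (marg2 (plan h G))) \<mu>"
  unfolding meas_le_def
proof
  fix A assume "A \<in> sets (hmarg (marg2 (plan h G)))"
  then have A[measurable]: "A \<in> sets borel" by simp
  have "emeasure (hmarg (marg2 (plan h G))) A
      = (\<integral>\<^sup>+pq. indicator G pq * (ennreal ((snd (snd pq))\<^sup>2) * indicator A (fst (snd pq))) \<partial>\<beta>0)"
    by (simp add: emeasure_hmarg nn_integral_marg2_plan)
  also have "\<dots> \<le> (\<integral>\<^sup>+pq. ennreal ((snd (snd pq))\<^sup>2) * indicator A (fst (snd pq)) \<partial>\<beta>0)"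
    by (intro nn_integral_mono indicator_mult_le)
  also have "\<dots> = emeasure (hmarg (marg2 \<beta>0)) A"
    by (simp add: emeasure_hmarg marg2_def nn_integral_distr)
  also have "\<dots> \<le> emeasure \<mu> A"
    using admissible_beta0 by (simp add: HK_admissible_def meas_le_def)
  finally show "emeasure (hmarg (marg2 (plan h G))) A \<le> emeasure \<mu> A" .
qed

lemma admissible_plan:
  assumes "h \<in> N" "G \<in> sets borel"
  shows "HK_admissible \<Lambda> \<Sigma> X xbar (\<nu> h) \<mu> (plan h G)"
  using assms emeasure_plan_finite emeasure_plan_outside_cone cone_M2_marg1_plan cone_M2_marg2_plan
    hmarg_marg1_plan_le hmarg_marg2_plan_le
  by (simp add: HK_admissible_def)

lemma abs_cross_le: "\<bar>cross h pq\<bar> \<le> (1 + \<bar>h\<bar> * R_bound) * ((snd (fst pq))\<^sup>2 + (snd (snd pq))\<^sup>2)"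
proof -
  have "\<bar>cross h pq\<bar> = \<bar>snd (fst pq) * snd (snd pq)\<bar> * \<bar>1 + h * R0 (fst (fst pq))\<bar> * \<bar>cos_term h pq\<bar>"
    by (simp add: cross_def abs_mult)
  also have "\<dots> \<le> ((snd (fst pq))\<^sup>2 + (snd (snd pq))\<^sup>2) * (1 + \<bar>h\<bar> * R_bound) * 1"
    by (intro mult_mono abs_mult_le_sum_squares abs_one_plus_R0_le abs_cos_term_le)
      (auto simp: R_bound(1))
  finally show ?thesis by (simp add: mult.commute)
qed

lemma integrable_cross: "G \<in> sets borel \<Longrightarrow> integrable \<beta>0 (\<lambda>pq. indicator G pq * cross h pq)"
  using abs_cross_le[of h] R_bound(1)
  by (intro integrable_beta0_dominated[where c="1 + \<bar>h\<bar> * R_bound"]) (auto simp: indicator_def)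

lemma integrable_shift_radius_sq:
  assumes [measurable]: "G \<in> sets borel"
  shows "integrable \<beta>0 (\<lambda>pq. indicator G pq * (snd (shift h (fst pq)))\<^sup>2)"
proof (rule integrable_beta0_dominated[where c="(1 + \<bar>h\<bar> * R_bound)\<^sup>2"])
  fix pq :: "('a \<times> real) \<times> ('a \<times> real)"
  have "(snd (shift h (fst pq)))\<^sup>2 \<le> (1 + \<bar>h\<bar> * R_bound)\<^sup>2 * ((snd (fst pq))\<^sup>2 + (snd (snd pq))\<^sup>2)"
    using snd_shift_sq_le[of h "fst pq"] by (simp add: distrib_left add_increasing2)
  then show "\<bar>indicator G pq * (snd (shift h (fst pq)))\<^sup>2\<bar>
      \<le> (1 + \<bar>h\<bar> * R_bound)\<^sup>2 * ((snd (fst pq))\<^sup>2 + (snd (snd pq))\<^sup>2)"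
    by (simp add: indicator_def)
qed measurable

lemma integrable_radius2_sq: "G \<in> sets borel \<Longrightarrow> integrable \<beta>0 (\<lambda>pq. indicator G pq * (snd (snd pq))\<^sup>2)"
  by (intro integrable_beta0_dominated[where c=1]) (auto simp: indicator_def)

lemma cone_d2_shift:
  assumes "pq \<in> cone \<times> cone"
  shows "cone_d2 \<Lambda> \<Sigma> (shift h (fst pq)) (snd pq)
    = 4 / \<Sigma> * (snd (shift h (fst pq)))\<^sup>2 + 4 / \<Sigma> * (snd (snd pq))\<^sup>2 - 8 / \<Sigma> * cross h pq"
proof -
  obtain x1 r1 x2 r2 where pq: "pq = ((x1, r1), (x2, r2))" by (cases pq) auto
  show ?thesis
  proof (cases "x1 \<in> X \<and> 0 < r1")
    case True
    then show ?thesis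
      by (simp add: pq shift_def cone_d2_def cross_def cos_term_def k_def algebra_simps power2_eq_square)
  next
    case False
    then have "r1 = 0" using assms by (auto simp: pq cone_set_def)
    with False show ?thesis by (simp add: pq shift_def cone_d2_def cross_def)
  qed
qed

lemma measure_hmarg_marg1_plan:
  assumes [measurable]: "G \<in> sets borel"
  shows "measure (hmarg (marg1 (plan h G))) UNIV = (\<integral>pq. indicator G pq * (snd (shift h (fst pq)))\<^sup>2 \<partial>\<beta>0)"
proof -
  have "emeasure (hmarg (marg1 (plan h G))) UNIV
      = (\<integral>\<^sup>+pq. indicator G pq * (ennreal ((snd (shift h (fst pq)))\<^sup>2) * indicator UNIV (fst (shift h (fst pq)))) \<partial>\<beta>0)"
    by (simp add: emeasure_hmarg nn_integral_marg1_plan)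
  also have "\<dots> = (\<integral>\<^sup>+pq. ennreal (indicator G pq * (snd (shift h (fst pq)))\<^sup>2) \<partial>\<beta>0)"
    by (intro nn_integral_cong) (simp add: ennreal_mult' ennreal_indicator)
  finally show ?thesis
    unfolding measure_def by (simp add: enn2real_nn_integral_eq_integral)
qed

lemma measure_hmarg_marg2_plan:
  assumes [measurable]: "G \<in> sets borel"
  shows "measure (hmarg (marg2 (plan h G))) UNIV = (\<integral>pq. indicator G pq * (snd (snd pq))\<^sup>2 \<partial>\<beta>0)"
proof -
  have "emeasure (hmarg (marg2 (plan h G))) UNIV
      = (\<integral>\<^sup>+pq. indicator G pq * (ennreal ((snd (snd pq))\<^sup>2) * indicator UNIV (fst (snd pq))) \<partial>\<beta>0)"
    by (simp add: emeasure_hmarg nn_integral_marg2_plan)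
  also have "\<dots> = (\<integral>\<^sup>+pq. ennreal (indicator G pq * (snd (snd pq))\<^sup>2) \<partial>\<beta>0)"
    by (intro nn_integral_cong) (simp add: ennreal_mult' ennreal_indicator)
  finally show ?thesis
    unfolding measure_def by (simp add: enn2real_nn_integral_eq_integral)
qed

lemma measure_nu:
  assumes "h \<in> N" shows "measure (\<nu> h) (space (\<nu> h)) = (\<integral>x. weight h x \<partial>\<nu>0)"
proof -
  have "measure (\<nu> h) (space (\<nu> h)) = (\<integral>x \<in> X. 1 \<partial>\<nu> h)"
    using set_integral_eq_integral_if_meas_on[OF nu_on_X[OF assms] closed_X, of "\<lambda>_. 1"] by simp
  also have "\<dots> = (\<integral>x \<in> X. (1 + h * R x)\<^sup>2 \<partial>\<nu>0)"
    using integral_nu[OF assms, of "\<lambda>_. 1"] by (simp add: bounded_iff exI[of _ 1])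
  also have "\<dots> = (\<integral>x. weight h x \<partial>\<nu>0)"
    unfolding set_lebesgue_integral_def
    by (intro Bochner_Integration.integral_cong) (auto simp: weight_def R0_def indicator_def)
  finally show ?thesis .
qed

lemma HK_cost_plan:
  assumes "h \<in> N" and G[measurable]: "G \<in> sets borel"
  shows "HK_cost \<Lambda> \<Sigma> (\<nu> h) \<mu> (plan h G) = cost h G"
proof -
  let ?M1 = "\<integral>pq. indicator G pq * (snd (shift h (fst pq)))\<^sup>2 \<partial>\<beta>0"
  let ?M2 = "\<integral>pq. indicator G pq * (snd (snd pq))\<^sup>2 \<partial>\<beta>0"
  let ?C = "\<integral>pq. indicator G pq * cross h pq \<partial>\<beta>0"
  have "(\<integral>pq. cone_d2 \<Lambda> \<Sigma> (fst pq) (snd pq) \<partial>plan h G)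
      = (\<integral>pq. indicator G pq * cone_d2 \<Lambda> \<Sigma> (shift h (fst pq)) (snd pq) \<partial>\<beta>0)"
    by (subst integral_plan) (simp_all add: cone_d2_def)
  also have "\<dots> = (\<integral>pq. 4 / \<Sigma> * (indicator G pq * (snd (shift h (fst pq)))\<^sup>2)
      + 4 / \<Sigma> * (indicator G pq * (snd (snd pq))\<^sup>2) - 8 / \<Sigma> * (indicator G pq * cross h pq) \<partial>\<beta>0)"
  proof (rule integral_cong_AE)
    show "(\<lambda>pq. indicator G pq * cone_d2 \<Lambda> \<Sigma> (shift h (fst pq)) (snd pq)) \<in> borel_measurable \<beta>0"
      unfolding cone_d2_def by measurable
    show "AE pq in \<beta>0. indicator G pq * cone_d2 \<Lambda> \<Sigma> (shift h (fst pq)) (snd pq)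
        = 4 / \<Sigma> * (indicator G pq * (snd (shift h (fst pq)))\<^sup>2)
          + 4 / \<Sigma> * (indicator G pq * (snd (snd pq))\<^sup>2) - 8 / \<Sigma> * (indicator G pq * cross h pq)"
      using AE_beta0_cone by eventually_elim (simp add: cone_d2_shift algebra_simps)
  qed measurable
  also have "\<dots> = 4 / \<Sigma> * ?M1 + 4 / \<Sigma> * ?M2 - 8 / \<Sigma> * ?C"
    using integrable_shift_radius_sq[OF G, of h] integrable_radius2_sq[OF G] integrable_cross[OF G, of h]
    by simp
  finally show ?thesis
    unfolding HK_cost_def using measure_hmarg_marg1_plan[OF G] measure_hmarg_marg2_plan[OF G]
    by (simp add: measure_nu[OF assms(1)] cost_def algebra_simps)
qed

lemma plan_zero_UNIV: "plan 0 UNIV = \<beta>0"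
proof -
  have "plan 0 UNIV = distr \<beta>0 borel (\<lambda>pq. (shift 0 (fst pq), snd pq))"
    by (simp add: plan_def density_1[unfolded indicator_def[symmetric]])
  also have "\<dots> = distr \<beta>0 borel (\<lambda>pq. pq)"
    using AE_beta0_cone by (intro distr_cong_AE) (auto simp: shift_zero)
  also have "\<dots> = \<beta>0"
    by (rule distr_id2) (simp add: sets_beta0)
  finally show ?thesis .
qed

lemma HK2_nu_le_cost: "h \<in> N \<Longrightarrow> HK2 \<Lambda> \<Sigma> X xbar (\<nu> h) \<mu> \<le> cost h UNIV"
  using HK2_le_HK_cost[OF admissible_plan nu_on_X mu_on_X Sigma_pos] HK_cost_plan by simp

lemma HK2_nu_zero: "HK2 \<Lambda> \<Sigma> X xbar (\<nu> 0) \<mu> = cost 0 UNIV"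
  using HK2_eq_HK_cost_if_optimal[OF optimal] HK_cost_plan[OF zero_in_N, of UNIV]
  by (simp add: plan_zero_UNIV nu_zero)

lemma AE_cross_zero_nonneg: "AE pq in \<beta>0. 0 \<le> cross 0 pq"
proof -
  define G where "G = {pq. 0 \<le> cross 0 pq}"
  have G[measurable]: "G \<in> sets borel" unfolding G_def by measurable
  have "HK_cost \<Lambda> \<Sigma> \<nu>0 \<mu> \<beta>0 \<le> HK_cost \<Lambda> \<Sigma> \<nu>0 \<mu> (plan 0 G)"
    using optimal admissible_plan[OF zero_in_N G] by (simp add: HK_optimal_def nu_zero)
  then have "cost 0 UNIV \<le> cost 0 G"
    using HK_cost_plan[OF zero_in_N G] HK_cost_plan[OF zero_in_N, of UNIV] by (simp add: plan_zero_UNIV nu_zero)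
  then have "(\<integral>pq. indicator G pq * cross 0 pq \<partial>\<beta>0) \<le> (\<integral>pq. cross 0 pq \<partial>\<beta>0)"
    using Sigma_pos by (simp add: cost_def divide_le_cancel)
  define f where "f pq = indicator G pq * cross 0 pq - cross 0 pq" for pq
  have f_integrable: "integrable \<beta>0 f"
    unfolding f_def[abs_def] using integrable_cross[OF G, of 0] integrable_cross[of UNIV 0] by simp
  moreover have f_nonneg: "AE pq in \<beta>0. 0 \<le> f pq"
    by (intro AE_I2) (simp add: f_def G_def indicator_def)
  moreover note \<open>(\<integral>pq. indicator G pq * cross 0 pq \<partial>\<beta>0) \<le> (\<integral>pq. cross 0 pq \<partial>\<beta>0)\<close>
  ultimately have "AE pq in \<beta>0. f pq = 0"
    using integral_nonneg_eq_0_iff_AE[OF f_integrable f_nonneg] integral_nonneg_AE[OF f_nonneg]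
      integrable_cross[OF G, of 0] integrable_cross[of UNIV 0]
    by (simp add: f_def[abs_def])
  then show ?thesis
    by eventually_elim (auto simp: f_def G_def indicator_def split: if_splits)
qed

section \<open>Differentiating the cost\<close>

definition cos_deriv :: "('a \<times> real) \<times> ('a \<times> real) \<Rightarrow> real" where
  "cos_deriv pq = k * inner (S_LS \<Lambda> \<Sigma> (fst (fst pq)) (fst (snd pq))) (v0 (fst (fst pq)))"

lemma k_nonneg: "0 \<le> k"
  using Lambda_pos Sigma_pos by (simp add: k_def)

lemma norm_v0_scaled_le: "k * norm (t *\<^sub>R v0 x) \<le> k * \<bar>t\<bar> * v_bound"
  using mult_left_mono[OF v_bound(2)[of x] abs_ge_zero[of t]] k_nonneg
  by (simp add: mult.assoc mult_left_mono)

lemma abs_cos_term_diff_le: "\<bar>cos_term t pq - cos_term 0 pq\<bar> \<le> k * \<bar>t\<bar> * v_bound"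
proof -
  let ?w = "fst (fst pq) - fst (snd pq)" and ?u = "v0 (fst (fst pq))"
  have "\<bar>cos_term t pq - cos_term 0 pq\<bar>
      \<le> \<bar>min (k * norm (?w + t *\<^sub>R ?u)) pi - min (k * norm (?w + 0 *\<^sub>R ?u)) pi\<bar>"
    unfolding cos_term_def by (rule abs_cos_diff_le)
  also have "\<dots> \<le> \<bar>k * norm (?w + t *\<^sub>R ?u) - k * norm (?w + 0 *\<^sub>R ?u)\<bar>"
    by (rule abs_min_diff_le)
  also have "\<dots> = k * \<bar>norm (?w + t *\<^sub>R ?u) - norm ?w\<bar>"
    using k_nonneg by (simp add: abs_mult right_diff_distrib[symmetric])
  also have "\<dots> \<le> k * norm (t *\<^sub>R ?u)"
    using k_nonneg norm_triangle_ineq3[of "?w + t *\<^sub>R ?u" ?w] by (intro mult_left_mono) auto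
  also have "\<dots> \<le> k * \<bar>t\<bar> * v_bound"
    by (rule norm_v0_scaled_le)
  finally show ?thesis .
qed

lemma tendsto_cos_term: "((\<lambda>t. cos_term t pq) \<longlongrightarrow> cos_term 0 pq) (at 0)"
proof -
  let ?w = "fst (fst pq) - fst (snd pq)" and ?u = "v0 (fst (fst pq))"
  have "((\<lambda>t. cos (min (k * norm (?w + t *\<^sub>R ?u)) pi)) \<longlongrightarrow> cos (min (k * norm (?w + 0 *\<^sub>R ?u)) pi)) (at 0)"
    by (intro tendsto_intros)
  then show ?thesis by (simp add: cos_term_def)
qed

lemma tendsto_cos_term_quotient_diagonal:
  assumes "fst (fst pq) = fst (snd pq)"
  shows "((\<lambda>t. (cos_term t pq - cos_term 0 pq) / t) \<longlongrightarrow> cos_deriv pq) (at 0)"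
proof -
  have bound: "norm ((cos_term t pq - cos_term 0 pq) / t) \<le> (k * v_bound)\<^sup>2 / 2 * \<bar>t\<bar>" for t
  proof -
    let ?y = "min (k * norm (t *\<^sub>R v0 (fst (fst pq)))) pi"
    have "?y \<le> k * \<bar>t\<bar> * v_bound"
      using norm_v0_scaled_le[of t "fst (fst pq)"] by linarith
    moreover have "0 \<le> ?y" using k_nonneg by simp
    ultimately have "?y\<^sup>2 \<le> (k * \<bar>t\<bar> * v_bound)\<^sup>2"
      by (rule power_mono)
    then have "\<bar>cos ?y - 1\<bar> \<le> (k * v_bound)\<^sup>2 / 2 * t\<^sup>2"
      using one_minus_cos_le[of ?y] cos_le_one[of ?y] by (simp add: power_mult_distrib mult_ac)
    moreover have "cos_term t pq = cos ?y" "cos_term 0 pq = 1"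
      using assms by (simp_all add: cos_term_def)
    ultimately have "\<bar>cos_term t pq - cos_term 0 pq\<bar> \<le> (k * v_bound)\<^sup>2 / 2 * t\<^sup>2"
      by simp
    then show ?thesis
      unfolding real_norm_def by (rule abs_divide_le_if_abs_le_sq)
  qed
  have "((\<lambda>t. (k * v_bound)\<^sup>2 / 2 * \<bar>t\<bar>) \<longlongrightarrow> (k * v_bound)\<^sup>2 / 2 * \<bar>0\<bar>) (at 0)"
    by (intro tendsto_intros)
  then have "((\<lambda>t. (k * v_bound)\<^sup>2 / 2 * \<bar>t\<bar>) \<longlongrightarrow> 0) (at 0)"
    by simp
  then have "((\<lambda>t. (cos_term t pq - cos_term 0 pq) / t) \<longlongrightarrow> 0) (at 0)"
    by (rule Lim_null_comparison[OF always_eventually[OF allI[OF bound]]])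
  moreover have "cos_deriv pq = 0"
    using assms by (simp add: cos_deriv_def S_LS_def)
  ultimately show ?thesis by simp
qed

lemma tendsto_cos_term_quotient_off_diagonal:
  assumes "fst (fst pq) \<noteq> fst (snd pq)" and below_pi: "k * norm (fst (fst pq) - fst (snd pq)) < pi"
  shows "((\<lambda>t. (cos_term t pq - cos_term 0 pq) / t) \<longlongrightarrow> cos_deriv pq) (at 0)"
proof -
  define w where "w = fst (fst pq) - fst (snd pq)"
  define u where "u = v0 (fst (fst pq))"
  define F where "F t = cos (k * norm (w + t *\<^sub>R u))" for t
  have "w \<noteq> 0" using assms(1) by (simp add: w_def)
  then have F_quotient: "((\<lambda>t. (F t - F 0) / t) \<longlongrightarrow> - sin (k * norm w) * (k * inner u (sgn w))) (at 0)"
    using has_real_derivative_cos_norm[of w k u] unfolding F_def[abs_def]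
    by (simp add: has_field_derivative_iff)
  have "((\<lambda>t. k * norm (w + t *\<^sub>R u)) \<longlongrightarrow> k * norm (w + 0 *\<^sub>R u)) (at 0)"
    by (intro tendsto_intros)
  then have "\<forall>\<^sub>F t in at 0. k * norm (w + t *\<^sub>R u) < pi"
    using below_pi by (intro order_tendstoD(2)) (auto simp: w_def)
  moreover have cos_term_eq: "cos_term t pq = F t" if "k * norm (w + t *\<^sub>R u) < pi" for t
    using that by (simp add: cos_term_def F_def w_def u_def)
  ultimately have "\<forall>\<^sub>F t in at 0. (cos_term t pq - cos_term 0 pq) / t = (F t - F 0) / t"
    using cos_term_eq[of 0] below_pi by (auto simp: w_def elim: eventually_mono)
  from tendsto_cong[OF this] F_quotient
  have "((\<lambda>t. (cos_term t pq - cos_term 0 pq) / t) \<longlongrightarrow> - sin (k * norm w) * (k * inner u (sgn w))) (at 0)"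
    by blast
  moreover have "cos_deriv pq = - sin (k * norm w) * (k * inner u (sgn w))"
  proof -
    have "S_LS \<Lambda> \<Sigma> (fst (fst pq)) (fst (snd pq)) = (sin (k * norm w) / norm w) *\<^sub>R (- w)"
      using assms(1) unfolding S_LS_def k_def[symmetric] w_def by simp
    moreover have "inner u (sgn w) = inner w u / norm w"
      by (simp add: sgn_div_norm inner_commute divide_inverse)
    ultimately show ?thesis
      by (simp add: cos_deriv_def u_def)
  qed
  ultimately show ?thesis by simp
qed

lemma below_pi_if_cross_zero_nonneg:
  assumes "pq \<in> cone \<times> cone" "0 \<le> cross 0 pq" "snd (fst pq) * snd (snd pq) \<noteq> 0"
  shows "k * norm (fst (fst pq) - fst (snd pq)) < pi"
proof (rule ccontr)
  assume "\<not> ?thesis"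
  then have "cos_term 0 pq = -1"
    by (simp add: cos_term_def)
  then have "cross 0 pq = - (snd (fst pq) * snd (snd pq))"
    by (simp add: cross_def)
  moreover have "0 < snd (fst pq) * snd (snd pq)"
    using assms(1,3) by (auto simp: cone_set_def)
  ultimately show False
    using assms(2) by linarith
qed

lemma tendsto_cos_term_quotient:
  assumes "pq \<in> cone \<times> cone" "0 \<le> cross 0 pq"
  shows "((\<lambda>t. snd (fst pq) * snd (snd pq) * ((cos_term t pq - cos_term 0 pq) / t))
    \<longlongrightarrow> snd (fst pq) * snd (snd pq) * cos_deriv pq) (at 0)"
proof (cases "snd (fst pq) * snd (snd pq) = 0")
  case False
  then have "((\<lambda>t. (cos_term t pq - cos_term 0 pq) / t) \<longlongrightarrow> cos_deriv pq) (at 0)"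
    using below_pi_if_cross_zero_nonneg[OF assms] tendsto_cos_term_quotient_diagonal
      tendsto_cos_term_quotient_off_diagonal by blast
  then show ?thesis by (intro tendsto_intros)
next
  case True
  then show ?thesis by (simp only: mult_zero_left tendsto_const)
qed

definition "cos_quotient t = (\<integral>pq. snd (fst pq) * snd (snd pq) * ((cos_term t pq - cos_term 0 pq) / t) \<partial>\<beta>0)"

definition "R_cos_integral t = (\<integral>pq. snd (fst pq) * snd (snd pq) * (R0 (fst (fst pq)) * cos_term t pq) \<partial>\<beta>0)"

definition "cost_quotient t = 4 / \<Sigma> * (2 * (\<integral>x. R0 x \<partial>\<nu>0) + t * (\<integral>x. (R0 x)\<^sup>2 \<partial>\<nu>0))
    - 8 / \<Sigma> * (cos_quotient t + R_cos_integral t)"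

definition "cost_derivative = 8 / \<Sigma> * (\<integral>x. R0 x \<partial>\<nu>0)
    - 8 / \<Sigma> * ((\<integral>pq. snd (fst pq) * snd (snd pq) * cos_deriv pq \<partial>\<beta>0) + R_cos_integral 0)"

lemma S_LS_measurable:
  "(\<lambda>p :: 'a \<times> 'a. S_LS \<Lambda> \<Sigma> (fst p) (snd p)) \<in> borel_measurable borel"
proof -
  have "(\<lambda>p :: 'a \<times> 'a. S_LS \<Lambda> \<Sigma> (fst p) (snd p)) = (\<lambda>p. if p \<in> {p. fst p = snd p} then 0
      else (sin (k * norm (fst p - snd p)) / norm (fst p - snd p)) *\<^sub>R (snd p - fst p))"
    by (auto simp: S_LS_def k_def)
  also have "\<dots> \<in> borel_measurable borel"
  proof (rule measurable_If_set)
    have "closed {p :: 'a \<times> 'a. fst p = snd p}"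
      by (intro closed_Collect_eq continuous_intros)
    then show "{p :: 'a \<times> 'a. fst p = snd p} \<inter> space borel \<in> sets borel"
      by simp
  qed measurable
  finally show ?thesis .
qed

lemma cos_deriv_measurable[measurable]: "cos_deriv \<in> borel_measurable borel"
proof -
  have "(\<lambda>pq :: ('a \<times> real) \<times> ('a \<times> real). (fst (fst pq), fst (snd pq))) \<in> borel_measurable borel"
    by measurable
  from measurable_compose[OF this S_LS_measurable]
  have "(\<lambda>pq :: ('a \<times> real) \<times> ('a \<times> real). S_LS \<Lambda> \<Sigma> (fst (fst pq)) (fst (snd pq))) \<in> borel_measurable borel"
    by simp
  then show ?thesis
    unfolding cos_deriv_def[abs_def] by measurable
qed

lemma abs_cos_deriv_le: "\<bar>cos_deriv pq\<bar> \<le> k * v_bound"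
proof -
  let ?S = "S_LS \<Lambda> \<Sigma> (fst (fst pq)) (fst (snd pq))"
  have "\<bar>inner ?S (v0 (fst (fst pq)))\<bar> \<le> norm ?S * norm (v0 (fst (fst pq)))"
    by (rule Cauchy_Schwarz_ineq2)
  also have "\<dots> \<le> 1 * v_bound"
    by (intro mult_mono v_bound) (auto simp: S_LS_def norm_minus_commute)
  finally show ?thesis
    using k_nonneg by (simp add: cos_deriv_def abs_mult mult_left_mono)
qed

lemma integrable_radius_product:
  assumes [measurable]: "f \<in> borel_measurable borel" and bound: "\<And>pq. \<bar>f pq\<bar> \<le> c"
  shows "integrable \<beta>0 (\<lambda>pq. snd (fst pq) * snd (snd pq) * f pq)"
proof (rule integrable_beta0_dominated[where c=c])
  show "\<bar>snd (fst pq) * snd (snd pq) * f pq\<bar> \<le> c * ((snd (fst pq))\<^sup>2 + (snd (snd pq))\<^sup>2)" for pq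
    using bound by (rule abs_mult_mult_le_sum_squares)
next
  have "(\<lambda>pq :: ('a \<times> real) \<times> ('a \<times> real). snd (fst pq) * snd (snd pq)) \<in> borel_measurable borel"
    by (intro borel_measurable_continuous_onI continuous_intros)
  then show "(\<lambda>pq. snd (fst pq) * snd (snd pq) * f pq) \<in> borel_measurable borel"
    using assms(1) by (rule borel_measurable_times)
qed

lemma integrable_nu0_bounded:
  fixes f :: "'a \<Rightarrow> real"
  assumes "f \<in> borel_measurable borel" and bound: "\<And>x. \<bar>f x\<bar> \<le> B"
  shows "integrable \<nu>0 f"
proof -
  interpret finite_measure \<nu>0
    by (rule finite_measure_if_meas_on[OF nu0_on_X])
  show ?thesis
    by (rule integrable_const_bound[where B=B]) (use assms in \<open>auto simp: measurable_cong_sets[OF sets_nu0 refl]\<close>)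
qed

lemma integral_weight:
  "(\<integral>x. weight h x \<partial>\<nu>0) = (\<integral>x. indicator X x \<partial>\<nu>0) + h * (2 * (\<integral>x. R0 x \<partial>\<nu>0) + h * (\<integral>x. (R0 x)\<^sup>2 \<partial>\<nu>0))"
proof -
  have "integrable \<nu>0 (\<lambda>x. indicator X x :: real)"
    by (rule integrable_nu0_bounded[where B=1]) auto
  moreover have "integrable \<nu>0 R0"
    by (rule integrable_nu0_bounded[OF _ R_bound(2)]) simp
  moreover have "integrable \<nu>0 (\<lambda>x. (R0 x)\<^sup>2)"
    using power_mono[OF R_bound(2) abs_ge_zero, of _ 2]
    by (intro integrable_nu0_bounded[where B="R_bound\<^sup>2"]) auto
  moreover have "weight h x = indicator X x + h * (2 * R0 x + h * (R0 x)\<^sup>2)" for x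
    by (simp add: weight_def R0_def indicator_def power2_eq_square algebra_simps)
  ultimately show ?thesis by simp
qed

lemma cost_difference:
  assumes "h \<noteq> 0" shows "cost h UNIV - cost 0 UNIV = h * cost_quotient h"
proof -
  let ?A = "\<lambda>t. \<integral>pq. snd (fst pq) * snd (snd pq) * cos_term t pq \<partial>\<beta>0"
  have integrable_cos: "integrable \<beta>0 (\<lambda>pq. snd (fst pq) * snd (snd pq) * cos_term t pq)" for t
    by (rule integrable_radius_product[where c=1]) (auto simp: abs_cos_term_le)
  have integrable_R_cos:
    "integrable \<beta>0 (\<lambda>pq. snd (fst pq) * snd (snd pq) * (R0 (fst (fst pq)) * cos_term t pq))" for t
    using mult_mono[OF R_bound(2) abs_cos_term_le] R_bound(1)
    by (intro integrable_radius_product[where c=R_bound]) (auto simp: abs_mult)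
  have cross_h: "(\<integral>pq. indicator UNIV pq * cross h pq \<partial>\<beta>0) = ?A h + h * R_cos_integral h"
    using integrable_cos[of h] integrable_mult_right[OF integrable_R_cos[of h], of h]
    by (simp add: cross_def R_cos_integral_def algebra_simps)
  have cross_0: "(\<integral>pq. indicator UNIV pq * cross 0 pq \<partial>\<beta>0) = ?A 0"
    by (simp add: cross_def)
  have "h * cos_quotient h
      = (\<integral>pq. h * (snd (fst pq) * snd (snd pq) * ((cos_term h pq - cos_term 0 pq) / h)) \<partial>\<beta>0)"
    unfolding cos_quotient_def by (rule integral_mult_right_zero[symmetric])
  also have "\<dots> = (\<integral>pq. snd (fst pq) * snd (snd pq) * cos_term h pq
      - snd (fst pq) * snd (snd pq) * cos_term 0 pq \<partial>\<beta>0)"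
    using assms by (intro Bochner_Integration.integral_cong) (auto simp: field_simps)
  also have "\<dots> = ?A h - ?A 0"
    using integrable_cos[of h] integrable_cos[of 0] by simp
  finally have cos_h: "h * cos_quotient h = ?A h - ?A 0" .
  have "cost h UNIV - cost 0 UNIV
      = 4 / \<Sigma> * ((\<integral>x. weight h x \<partial>\<nu>0) - (\<integral>x. weight 0 x \<partial>\<nu>0))
        - 8 / \<Sigma> * ((\<integral>pq. indicator UNIV pq * cross h pq \<partial>\<beta>0) - (\<integral>pq. indicator UNIV pq * cross 0 pq \<partial>\<beta>0))"
    using Sigma_pos unfolding cost_def by (simp add: field_simps)
  also have "\<dots> = 4 / \<Sigma> * (h * (2 * (\<integral>x. R0 x \<partial>\<nu>0) + h * (\<integral>x. (R0 x)\<^sup>2 \<partial>\<nu>0)))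
        - 8 / \<Sigma> * (h * cos_quotient h + h * R_cos_integral h)"
    unfolding integral_weight cross_h cross_0 cos_h by simp
  also have "\<dots> = h * cost_quotient h"
    unfolding cost_quotient_def by (simp only: distrib_left right_diff_distrib mult.left_commute)
  finally show ?thesis .
qed
lemma tendsto_cos_quotient:
  "(cos_quotient \<longlongrightarrow> (\<integral>pq. snd (fst pq) * snd (snd pq) * cos_deriv pq \<partial>\<beta>0)) (at 0)"
  unfolding cos_quotient_def[abs_def]
proof (rule tendsto_integral_at[where w="\<lambda>pq. k * v_bound * ((snd (fst pq))\<^sup>2 + (snd (snd pq))\<^sup>2)"])
  show "integrable \<beta>0 (\<lambda>pq. k * v_bound * ((snd (fst pq))\<^sup>2 + (snd (snd pq))\<^sup>2))"
    using integrable_beta0_radius_sq by simp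
  show "AE pq in \<beta>0. ((\<lambda>t. snd (fst pq) * snd (snd pq) * ((cos_term t pq - cos_term 0 pq) / t))
      \<longlongrightarrow> snd (fst pq) * snd (snd pq) * cos_deriv pq) (at 0)"
    using AE_beta0_cone AE_cross_zero_nonneg by eventually_elim (rule tendsto_cos_term_quotient)
  have "\<bar>(cos_term t pq - cos_term 0 pq) / t\<bar> \<le> k * v_bound" for t pq
    using abs_cos_term_diff_le[of t pq] k_nonneg v_bound(1)
    by (cases "t = 0") (simp_all add: divide_le_eq mult_ac)
  then show "AE pq in \<beta>0. norm (snd (fst pq) * snd (snd pq) * ((cos_term t pq - cos_term 0 pq) / t))
      \<le> k * v_bound * ((snd (fst pq))\<^sup>2 + (snd (snd pq))\<^sup>2)" for t
    unfolding real_norm_def by (intro AE_I2 abs_mult_mult_le_sum_squares)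
qed measurable

lemma tendsto_R_cos_integral: "(R_cos_integral \<longlongrightarrow> R_cos_integral 0) (at 0)"
  unfolding R_cos_integral_def[abs_def]
proof (rule tendsto_integral_at[where w="\<lambda>pq. R_bound * ((snd (fst pq))\<^sup>2 + (snd (snd pq))\<^sup>2)"])
  show "integrable \<beta>0 (\<lambda>pq. R_bound * ((snd (fst pq))\<^sup>2 + (snd (snd pq))\<^sup>2))"
    using integrable_beta0_radius_sq by simp
  show "AE pq in \<beta>0. ((\<lambda>t. snd (fst pq) * snd (snd pq) * (R0 (fst (fst pq)) * cos_term t pq))
      \<longlongrightarrow> snd (fst pq) * snd (snd pq) * (R0 (fst (fst pq)) * cos_term 0 pq)) (at 0)"
    by (intro AE_I2 tendsto_mult_left tendsto_cos_term)
  have "\<bar>R0 (fst (fst pq)) * cos_term t pq\<bar> \<le> R_bound" for t pq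
    using mult_mono[OF R_bound(2) abs_cos_term_le] R_bound(1) by (simp add: abs_mult)
  then show "AE pq in \<beta>0. norm (snd (fst pq) * snd (snd pq) * (R0 (fst (fst pq)) * cos_term t pq))
      \<le> R_bound * ((snd (fst pq))\<^sup>2 + (snd (snd pq))\<^sup>2)" for t
    unfolding real_norm_def by (intro AE_I2 abs_mult_mult_le_sum_squares)
qed measurable

lemma tendsto_cost_quotient: "(cost_quotient \<longlongrightarrow> cost_derivative) (at 0)"
proof -
  have "(cost_quotient \<longlongrightarrow> 4 / \<Sigma> * (2 * (\<integral>x. R0 x \<partial>\<nu>0) + 0 * (\<integral>x. (R0 x)\<^sup>2 \<partial>\<nu>0))
      - 8 / \<Sigma> * ((\<integral>pq. snd (fst pq) * snd (snd pq) * cos_deriv pq \<partial>\<beta>0) + R_cos_integral 0)) (at 0)"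
    unfolding cost_quotient_def[abs_def]
    by (intro tendsto_diff tendsto_mult_left tendsto_add tendsto_const tendsto_mult tendsto_ident_at
        tendsto_cos_quotient tendsto_R_cos_integral)
  then show ?thesis
    by (simp add: cost_derivative_def)
qed

lemma fst_in_X_if_in_cone: "p \<in> cone \<Longrightarrow> fst p \<in> X"
  using xbar_in_X by (auto simp: cone_set_def)

lemma frakF_eq:
  "frakF \<Lambda> \<Sigma> X xbar \<beta>0 v R = 4 / \<Sigma> * (\<integral>pq. snd (fst pq) * snd (snd pq) * (R0 (fst (fst pq)) * cos_term 0 pq)
      + snd (fst pq) * snd (snd pq) * cos_deriv pq - (snd (fst pq))\<^sup>2 * R0 (fst (fst pq)) \<partial>\<beta>0)"
proof -
  let ?F = "\<lambda>pq. snd (fst pq) * snd (snd pq) * (R0 (fst (fst pq)) * cos (k * norm (fst (fst pq) - fst (snd pq))))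
      + snd (fst pq) * snd (snd pq) * cos_deriv pq - (snd (fst pq))\<^sup>2 * R0 (fst (fst pq))"
  have integrand: "indicator (cone \<times> cone) pq *\<^sub>R
      (let x1 = fst (fst pq); r1 = snd (fst pq); x2 = fst (snd pq); r2 = snd (snd pq); k = sqrt (\<Sigma> / (4 * \<Lambda>))
       in - r1\<^sup>2 * R x1 + r1 * r2 * R x1 * cos (k * norm (x1 - x2)) + r1 * r2 * k * inner (S_LS \<Lambda> \<Sigma> x1 x2) (v x1))
      = indicator (cone \<times> cone) pq * ?F pq" for pq
  proof (cases "pq \<in> cone \<times> cone")
    case True
    then have "fst (fst pq) \<in> X" by (auto intro: fst_in_X_if_in_cone)
    with True show ?thesis
      by (simp add: Let_def k_def R0_def v0_def cos_deriv_def algebra_simps)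
  qed simp
  have "AE pq in \<beta>0. indicator (cone \<times> cone) pq * ?F pq
      = snd (fst pq) * snd (snd pq) * (R0 (fst (fst pq)) * cos_term 0 pq)
        + snd (fst pq) * snd (snd pq) * cos_deriv pq - (snd (fst pq))\<^sup>2 * R0 (fst (fst pq))"
    using AE_beta0_cone AE_cross_zero_nonneg
  proof eventually_elim
    case (elim pq)
    have "snd (fst pq) * snd (snd pq) * cos (k * norm (fst (fst pq) - fst (snd pq)))
        = snd (fst pq) * snd (snd pq) * cos_term 0 pq"
      using below_pi_if_cross_zero_nonneg[OF elim] by (cases "snd (fst pq) * snd (snd pq) = 0") (simp_all add: cos_term_def)
    then show ?case
      using elim(1) by (auto simp: mult.left_commute[of "R0 _"])
  qed
  then show ?thesis
    unfolding frakF_def set_lebesgue_integral_def integrand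
    by (intro arg_cong[where f="(*) (4 / \<Sigma>)"] integral_cong_AE) measurable
qed

lemma set_integral_R_eq_integral_R0:
  "(\<integral>x \<in> X. R x \<partial>M) = (\<integral>x. R0 x \<partial>M)"
  unfolding set_lebesgue_integral_def
  by (intro Bochner_Integration.integral_cong) (auto simp: R0_def indicator_def)

lemma subgradient_eq_minus_half_cost_derivative:
  "frakF \<Lambda> \<Sigma> X xbar \<beta>0 v R - 4 / \<Sigma> * ((\<integral>x \<in> X. R x \<partial>\<nu>0) - (\<integral>x \<in> X. R x \<partial>hmarg (marg1 \<beta>0)))
    = - cost_derivative / 2"
proof -
  have "(\<integral>x \<in> X. R x \<partial>hmarg (marg1 \<beta>0)) = (\<integral>pq. (snd (fst pq))\<^sup>2 * R0 (fst (fst pq)) \<partial>\<beta>0)"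
    by (simp add: set_integral_R_eq_integral_R0 integral_hmarg marg1_def integral_distr)
  moreover have "integrable \<beta>0 (\<lambda>pq. snd (fst pq) * snd (snd pq) * (R0 (fst (fst pq)) * cos_term 0 pq))"
    using mult_mono[OF R_bound(2) abs_cos_term_le] R_bound(1)
    by (intro integrable_radius_product[where c=R_bound]) (auto simp: abs_mult)
  moreover have "integrable \<beta>0 (\<lambda>pq. snd (fst pq) * snd (snd pq) * cos_deriv pq)"
    using abs_cos_deriv_le by (intro integrable_radius_product[where c="k * v_bound"]) auto
  moreover have "integrable \<beta>0 (\<lambda>pq. (snd (fst pq))\<^sup>2 * R0 (fst (fst pq)))"
  proof (rule integrable_beta0_dominated[where c=R_bound])
    fix pq :: "('a \<times> real) \<times> ('a \<times> real)"
    have "(snd (fst pq))\<^sup>2 * \<bar>R0 (fst (fst pq))\<bar> \<le> (snd (fst pq))\<^sup>2 * R_bound"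
      by (rule mult_left_mono[OF R_bound(2) zero_le_power2])
    moreover have "0 \<le> R_bound * (snd (snd pq))\<^sup>2"
      using R_bound(1) by simp
    ultimately show "\<bar>(snd (fst pq))\<^sup>2 * R0 (fst (fst pq))\<bar> \<le> R_bound * ((snd (fst pq))\<^sup>2 + (snd (snd pq))\<^sup>2)"
      by (simp add: abs_mult distrib_left mult.commute[of R_bound])
  qed measurable
  ultimately show ?thesis
    using Sigma_pos
    by (simp add: frakF_eq set_integral_R_eq_integral_R0 cost_derivative_def R_cos_integral_def field_simps)
qed

theorem subgradient_in_frechet_subdiff0:
  "frakF \<Lambda> \<Sigma> X xbar \<beta>0 v R - 4 / \<Sigma> * ((\<integral>x \<in> X. R x \<partial>\<nu>0) - (\<integral>x \<in> X. R x \<partial>hmarg (marg1 \<beta>0)))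
    \<in> frechet_subdiff0 (\<lambda>h. - (1/2) * HK2 \<Lambda> \<Sigma> X xbar (\<nu> h) \<mu>)"
  unfolding subgradient_eq_minus_half_cost_derivative
proof (rule frechet_subdiff0I)
  show "((\<lambda>h. - cost_quotient h / 2) \<longlongrightarrow> - cost_derivative / 2) (at 0)"
    by (intro tendsto_divide tendsto_minus tendsto_cost_quotient tendsto_const) simp
  have "\<forall>\<^sub>F h in at 0. h \<in> interior N - {0}"
    using zero_in_interior by (intro eventually_at_in_open) auto
  then show "\<forall>\<^sub>F h in at 0. h * (- cost_quotient h / 2)
      \<le> - (1/2) * HK2 \<Lambda> \<Sigma> X xbar (\<nu> h) \<mu> - - (1/2) * HK2 \<Lambda> \<Sigma> X xbar (\<nu> 0) \<mu>"
  proof eventually_elim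
    case (elim h)
    then have "HK2 \<Lambda> \<Sigma> X xbar (\<nu> h) \<mu> - HK2 \<Lambda> \<Sigma> X xbar (\<nu> 0) \<mu> \<le> h * cost_quotient h"
      using HK2_nu_le_cost[of h] HK2_nu_zero cost_difference[of h] interior_subset by fastforce
    then show ?case by simp
  qed
qed

end

theorem proposition2p3:
  fixes X :: "'a::{real_inner, polish_space} set"
    and xbar :: 'a
    and \<Lambda> \<Sigma> :: real
    and v :: "'a \<Rightarrow> 'a" and R :: "'a \<Rightarrow> real"
    and N :: "real set"
    and \<nu>0 \<mu> :: "'a measure" and \<nu> :: "real \<Rightarrow> 'a measure"
    and \<beta>0 :: "(('a \<times> real) \<times> ('a \<times> real)) measure"
  assumes "closed X" and "convex X" and "xbar \<in> X"
    and "\<Lambda> > 0" and "\<Sigma> > 0"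
    and "v \<in> borel_measurable (restrict_space borel X)" and "bounded (v ` X)"
    and "R \<in> borel_measurable (restrict_space borel X)" and "bounded (R ` X)"
    and "0 \<in> interior N"
    and "\<And>h x. h \<in> N \<Longrightarrow> x \<in> X \<Longrightarrow> x + h *\<^sub>R v x \<in> X \<and> 1 + h * R x > 0"
    and "meas_on X \<nu>0"
    and "\<And>h. h \<in> N \<Longrightarrow> meas_on X (\<nu> h)"
    and "\<And>h \<phi>. h \<in> N \<Longrightarrow> continuous_on X \<phi> \<Longrightarrow> bounded (\<phi> ` X) \<Longrightarrow>
           (\<integral>x \<in> X. (\<phi> x :: real) \<partial>(\<nu> h))
             = (\<integral>x \<in> X. \<phi> (x + h *\<^sub>R v x) * (1 + h * R x)\<^sup>2 \<partial>\<nu>0)"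
    and "meas_on X \<mu>"
    and "HK_optimal \<Lambda> \<Sigma> X xbar \<nu>0 \<mu> \<beta>0"
  shows "frechet_subdiff0 (\<lambda>h. - (1/2) * HK2 \<Lambda> \<Sigma> X xbar (\<nu> h) \<mu>) \<noteq> {}
    \<and> frakF \<Lambda> \<Sigma> X xbar \<beta>0 v R
        - (4 / \<Sigma>) * ((\<integral>x \<in> X. R x \<partial>\<nu>0) - (\<integral>x \<in> X. R x \<partial>(hmarg (marg1 \<beta>0))))
      \<in> frechet_subdiff0 (\<lambda>h. - (1/2) * HK2 \<Lambda> \<Sigma> X xbar (\<nu> h) \<mu>)"
proof -
  interpret HK_perturbation X xbar \<Lambda> \<Sigma> v R N \<nu>0 \<mu> \<nu> \<beta>0
    by unfold_locales (fact assms)+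
  show ?thesis
    using subgradient_in_frechet_subdiff0 by auto
qed

end
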